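(* Let $g\geq 3$ be an integer and $p$ a prime. Then \[H_2(\mathfrak{sp}_{2g}(p);\mathbb Z)_{Sp(2g,\mathbb Z/p\mathbb Z)}=\begin{cases}0, & p \text{ odd},\\ \mathbb Z/2\mathbb Z, & p=2.\end{cases}\]
   Context: $\mathfrak{sp}_{2g}(p)$ is the additive (abelian) group of $2g\times 2g$ matrices $M$ with entries in $\mathbb Z/p\mathbb Z$ satisfying $M^{\top}J_g+J_gM=0$, where $J_g=\begin{pmatrix}0&\mathbf 1_g\\-\mathbf 1_g&0\end{pmatrix}$; equivalently $M=\begin{pmatrix}A&B\\C&D\end{pmatrix}$ with $A+D^{\top}=0$ and $B$, $C$ symmetric. The group $Sp(2g,\mathbb Z/p\mathbb Z)$ acts on it by conjugation, inducing an action on $H_2(\mathfrak{sp}_{2g}(p);\mathbb Z)\cong\wedge^2\mathfrak{sp}_{2g}(p)$; the subscript denotes coinvariants (quotient by the subgroup generated by $g\cdot x-x$). *)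

theory Defs
  imports "HOL-Algebra.Free_Abelian_Groups" "HOL-Algebra.Elementary_Groups"
    "HOL-Algebra.Generated_Groups" "HOL-Computational_Algebra.Primes"
begin

text \<open>Square matrices of size n over Z/pZ, represented as functions
  nat => nat => int whose entries with indices i,j < n lie in {0..<p}
  and which vanish outside the n x n block.\<close>

type_synonym mat = "nat \<Rightarrow> nat \<Rightarrow> int"

definition is_mat :: "nat \<Rightarrow> nat \<Rightarrow> mat \<Rightarrow> bool" where
  "is_mat p n M \<longleftrightarrow> (\<forall>i j. (i < n \<and> j < n \<longrightarrow> 0 \<le> M i j \<and> M i j < int p)
                          \<and> (\<not> (i < n \<and> j < n) \<longrightarrow> M i j = 0))"

definition mat_add :: "nat \<Rightarrow> nat \<Rightarrow> mat \<Rightarrow> mat \<Rightarrow> mat" where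
  "mat_add p n A B = (\<lambda>i j. if i < n \<and> j < n then (A i j + B i j) mod int p else 0)"

definition mat_mul :: "nat \<Rightarrow> nat \<Rightarrow> mat \<Rightarrow> mat \<Rightarrow> mat" where
  "mat_mul p n A B = (\<lambda>i j. if i < n \<and> j < n then (\<Sum>k<n. A i k * B k j) mod int p else 0)"

definition mat_trans :: "nat \<Rightarrow> mat \<Rightarrow> mat" where
  "mat_trans n A = (\<lambda>i j. if i < n \<and> j < n then A j i else 0)"

definition mat_zero :: mat where
  "mat_zero = (\<lambda>i j. 0)"

definition mat_one :: "nat \<Rightarrow> mat" where
  "mat_one n = (\<lambda>i j. if i < n \<and> j < n \<and> i = j then 1 else 0)"

text \<open>J_g = [[0, 1_g], [-1_g, 0]] with entries reduced mod p.\<close>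
definition J_mat :: "nat \<Rightarrow> nat \<Rightarrow> mat" where
  "J_mat p g = (\<lambda>i j. if i < g \<and> j = i + g then 1 mod int p
                      else if g \<le> i \<and> i < 2*g \<and> j = i - g then (-1) mod int p
                      else 0)"

definition sp_lie :: "nat \<Rightarrow> nat \<Rightarrow> mat set" where
  "sp_lie p g = {M. is_mat p (2*g) M \<and>
     mat_add p (2*g) (mat_mul p (2*g) (mat_trans (2*g) M) (J_mat p g))
                     (mat_mul p (2*g) (J_mat p g) M) = mat_zero}"

definition Sp_grp :: "nat \<Rightarrow> nat \<Rightarrow> mat set" where
  "Sp_grp p g = {X. is_mat p (2*g) X \<and>
     mat_mul p (2*g) (mat_trans (2*g) X) (mat_mul p (2*g) (J_mat p g) X) = J_mat p g}"

text \<open>Generators of the relations defining the coinvariants of the integral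
  exterior square \<wedge>^2 sp_2g(p) (= H_2 of the abelian group sp_2g(p)) under
  the conjugation action of Sp(2g,Z/pZ).  A pair (M,N) stands for M \<wedge> N.\<close>
definition coinv_rels :: "nat \<Rightarrow> nat \<Rightarrow> (mat \<times> mat \<Rightarrow>\<^sub>0 int) set" where
  "coinv_rels p g =
     {frag_of (mat_add p (2*g) M M', N) - frag_of (M, N) - frag_of (M', N)
        | M M' N. M \<in> sp_lie p g \<and> M' \<in> sp_lie p g \<and> N \<in> sp_lie p g}
   \<union> {frag_of (M, mat_add p (2*g) N N') - frag_of (M, N) - frag_of (M, N')
        | M N N'. M \<in> sp_lie p g \<and> N \<in> sp_lie p g \<and> N' \<in> sp_lie p g}
   \<union> {frag_of (M, M) | M. M \<in> sp_lie p g}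
   \<union> {frag_of (mat_mul p (2*g) X (mat_mul p (2*g) M Y),
               mat_mul p (2*g) X (mat_mul p (2*g) N Y)) - frag_of (M, N)
        | X Y M N. X \<in> Sp_grp p g \<and> is_mat p (2*g) Y \<and>
                   mat_mul p (2*g) X Y = mat_one (2*g) \<and>
                   M \<in> sp_lie p g \<and> N \<in> sp_lie p g}"

definition H2_coinv :: "nat \<Rightarrow> nat \<Rightarrow> (mat \<times> mat \<Rightarrow>\<^sub>0 int) set monoid" where
  "H2_coinv p g =
     free_Abelian_group (sp_lie p g \<times> sp_lie p g)
       Mod generate (free_Abelian_group (sp_lie p g \<times> sp_lie p g)) (coinv_rels p g)"

end

theory Submission
  imports Defs "HOL-Library.Function_Algebras" "HOL-Number_Theory.Cong"
begin

text \<open>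
  Every \<open>M \<in> sp\<^sub>2\<^sub>g(p)\<close> is \<open>S J\<close> with \<open>S\<close> symmetric, so \<open>sp\<^sub>2\<^sub>g(p)\<close> is spanned additively by the
  "squares" \<open>u u\<^sup>T J\<close>, on which conjugation acts through the action of \<open>Sp\<close> on vectors.  Hence
  the coinvariants are generated by the classes \<open>[u\<^sup>2 \<and> v\<^sup>2]\<close>, and conjugating by a symplectic
  transvection \<open>x \<mapsto> x + a \<omega>(w, x) w\<close> moves the pair \<open>(u, v)\<close> without changing the class.

  For odd \<open>p\<close>, if \<open>\<omega>(u, v)\<close> is a unit, three transvections carry \<open>(u, v)\<close> to \<open>(v, -u)\<close>, so the
  class equals its own negative; being also killed by \<open>p\<close>, it vanishes.  The case
  \<open>\<omega>(u, v) \<equiv> 0\<close> reduces to this by expanding bilinearly along a suitable basis vector.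

  For \<open>p = 2\<close> the same moves show that \<open>[u\<^sup>2 \<and> v\<^sup>2]\<close> depends only on \<open>\<omega>(u, v) mod 2\<close>, so the
  coinvariants are generated by \<open>[e\<^sub>0\<^sup>2 \<and> e\<^sub>g\<^sup>2]\<close>, of order at most 2.  The conjugation-invariant
  pairing \<open>M \<and> N \<mapsto> \<omega>(diag (J M), diag (J N)) mod 2\<close> is 1 on this generator.
\<close>

text \<open>Computations take place on integer representatives: matrices and vectors with entries
  in \<open>\<int>\<close>, compared by entrywise congruence mod \<open>p\<close> on the relevant block (\<open>mcong\<close>,
  \<open>vcong\<close>); \<open>mat_red\<close> picks the reduced representative used by \<open>mat_add\<close> and \<open>mat_mul\<close>.
  The symplectic form is \<open>\<omega>(u, v) = u\<^sup>T J v\<close> (\<open>symp\<close>), and \<open>symp_row g u\<close> is the row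
  vector \<open>u\<^sup>T J\<close>.\<close>

definition mat_red :: "nat \<Rightarrow> nat \<Rightarrow> mat \<Rightarrow> mat" where
  "mat_red p n A = (\<lambda>i j. if i < n \<and> j < n then A i j mod int p else 0)"

definition mcong :: "nat \<Rightarrow> nat \<Rightarrow> mat \<Rightarrow> mat \<Rightarrow> bool" where
  "mcong p n A B \<longleftrightarrow> (\<forall>i<n. \<forall>j<n. A i j mod int p = B i j mod int p)"

definition vcong :: "nat \<Rightarrow> nat \<Rightarrow> (nat \<Rightarrow> int) \<Rightarrow> (nat \<Rightarrow> int) \<Rightarrow> bool" where
  "vcong p n u v \<longleftrightarrow> (\<forall>i<n. u i mod int p = v i mod int p)"

definition mmul :: "nat \<Rightarrow> mat \<Rightarrow> mat \<Rightarrow> mat" where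
  "mmul n A B = (\<lambda>i j. \<Sum>k<n. A i k * B k j)"

definition mvmul :: "nat \<Rightarrow> mat \<Rightarrow> (nat \<Rightarrow> int) \<Rightarrow> nat \<Rightarrow> int" where
  "mvmul n A u = (\<lambda>i. \<Sum>k<n. A i k * u k)"

definition vmmul :: "nat \<Rightarrow> (nat \<Rightarrow> int) \<Rightarrow> mat \<Rightarrow> nat \<Rightarrow> int" where
  "vmmul n v B = (\<lambda>j. \<Sum>k<n. v k * B k j)"

definition mtransp :: "mat \<Rightarrow> mat" where
  "mtransp A = (\<lambda>i j. A j i)"

definition outer :: "(nat \<Rightarrow> int) \<Rightarrow> (nat \<Rightarrow> int) \<Rightarrow> mat" where
  "outer u v = (\<lambda>i j. u i * v j)"

definition msmult :: "int \<Rightarrow> mat \<Rightarrow> mat" where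
  "msmult c A = (\<lambda>i j. c * A i j)"

definition vsmult :: "int \<Rightarrow> (nat \<Rightarrow> int) \<Rightarrow> nat \<Rightarrow> int" where
  "vsmult c u = (\<lambda>i. c * u i)"

definition Jint :: "nat \<Rightarrow> mat" where
  "Jint g = (\<lambda>i j. if i < g \<and> j = i + g then 1
                   else if g \<le> i \<and> i < 2*g \<and> j = i - g then -1 else 0)"

definition symp :: "nat \<Rightarrow> (nat \<Rightarrow> int) \<Rightarrow> (nat \<Rightarrow> int) \<Rightarrow> int" where
  "symp g u v = (\<Sum>i<g. u i * v (i+g) - u (i+g) * v i)"

definition symp_row :: "nat \<Rightarrow> (nat \<Rightarrow> int) \<Rightarrow> nat \<Rightarrow> int" where
  "symp_row g u = (\<lambda>j. if j < g then - u (j+g) else if j < 2*g then u (j-g) else 0)"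

lemma mcong_refl[simp]: "mcong p n A A" by (simp add: mcong_def)

lemma mcong_sym: "mcong p n A B \<Longrightarrow> mcong p n B A" by (simp add: mcong_def)

lemma mcong_trans [trans]: "mcong p n A B \<Longrightarrow> mcong p n B C \<Longrightarrow> mcong p n A C" by (simp add: mcong_def)

lemma mcong_add: "mcong p n A A' \<Longrightarrow> mcong p n B B' \<Longrightarrow> mcong p n (A+B) (A'+B')"
  unfolding mcong_def plus_fun_def by (metis mod_add_cong)

lemma mcong_msmult: "mcong p n A A' \<Longrightarrow> mcong p n (msmult c A) (msmult c A')"
  unfolding mcong_def msmult_def by (metis mod_mult_cong)

lemma mcong_mat_red: "mcong p n (mat_red p n A) A" by (simp add: mcong_def mat_red_def)

lemma is_mat_mat_red: "0 < p \<Longrightarrow> is_mat p n (mat_red p n A)" by (simp add: is_mat_def mat_red_def)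

lemma mcong_imp_eq: assumes "is_mat p n A" "is_mat p n B" "mcong p n A B" shows "A = B"
proof (intro ext)
  fix i j show "A i j = B i j"
  proof (cases "i < n \<and> j < n")
    case True
    then have "A i j mod int p = A i j" "B i j mod int p = B i j"
      using assms(1,2) unfolding is_mat_def by auto
    then show ?thesis using assms(3) True unfolding mcong_def by metis
  next
    case False then show ?thesis using assms(1,2) unfolding is_mat_def by auto
  qed
qed

lemma mat_mul_eq_red: "mat_mul p n A B = mat_red p n (mmul n A B)"
  by (simp add: mat_mul_def mat_red_def mmul_def)

lemma mat_add_eq_red: "mat_add p n A B = mat_red p n (A + B)"
  by (simp add: mat_add_def mat_red_def plus_fun_def)

lemma mcong_mat_trans: "mcong p n (mat_trans n A) (mtransp A)"
  by (simp add: mcong_def mat_trans_def mtransp_def)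

lemma mcong_mmul:
  assumes "mcong p n A A'" "mcong p n B B'"
  shows "mcong p n (mmul n A B) (mmul n A' B')"
  unfolding mcong_def mmul_def cong_def[symmetric]
proof (intro allI impI cong_sum)
  fix i j k assume "i < n" "j < n" "k \<in> {..<n}"
  then show "[A i k * B k j = A' i k * B' k j] (mod int p)"
    using assms by (intro cong_mult) (auto simp: mcong_def cong_def)
qed

lemma mmul_assoc: "mmul n (mmul n A B) C = mmul n A (mmul n B C)"
  unfolding mmul_def by (auto simp: sum_distrib_left sum_distrib_right mult.assoc intro!: ext
      sum.swap[THEN trans])

lemma mmul_add_left: "mmul n (A + B) C = mmul n A C + mmul n B C"
  unfolding mmul_def plus_fun_def by (auto simp: algebra_simps sum.distrib intro!: ext)

lemma mmul_add_right: "mmul n A (B + C) = mmul n A B + mmul n A C"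
  unfolding mmul_def plus_fun_def by (auto simp: algebra_simps sum.distrib intro!: ext)

lemma mmul_msmult_left: "mmul n (msmult c A) B = msmult c (mmul n A B)"
  unfolding mmul_def msmult_def by (auto simp: sum_distrib_left mult.assoc intro!: ext)

lemma mmul_msmult_right: "mmul n A (msmult c B) = msmult c (mmul n A B)"
  unfolding mmul_def msmult_def by (auto simp: sum_distrib_left algebra_simps intro!: ext)

lemma mmul_outer_left: "mmul n (outer u v) B = outer u (vmmul n v B)"
  unfolding mmul_def outer_def vmmul_def by (auto simp: sum_distrib_left mult.assoc intro!: ext)

lemma mmul_outer_right: "mmul n A (outer u v) = outer (mvmul n A u) v"
  unfolding mmul_def outer_def mvmul_def by (auto simp: sum_distrib_right mult.assoc intro!: ext)

lemma mtransp_add: "mtransp (A + B) = mtransp A + mtransp B" by (simp add: mtransp_def plus_fun_def)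

lemma mtransp_msmult: "mtransp (msmult c A) = msmult c (mtransp A)"
  by (simp add: mtransp_def msmult_def)

lemma mtransp_outer: "mtransp (outer u v) = outer v u"
  by (auto simp: mtransp_def outer_def intro!: ext)

lemma mtransp_mmul: "mtransp (mmul n A B) = mmul n (mtransp B) (mtransp A)"
  by (auto simp: mtransp_def mmul_def mult.commute intro!: ext)

lemma mcong_mtransp: "mcong p n A B \<Longrightarrow> mcong p n (mtransp A) (mtransp B)"
  by (simp add: mcong_def mtransp_def)

lemma msmult_one[simp]: "msmult 1 A = A" by (simp add: msmult_def)

lemma msmult_msmult: "msmult c (msmult d A) = msmult (c*d) A" by (auto simp: msmult_def mult.assoc)

lemma mmul_one_left: "mcong p n (mmul n (mat_one n) A) A"
proof -
  have "i < n \<Longrightarrow> (\<Sum>k<n. (if i < n \<and> k < n \<and> i = k then 1 else 0) * A k j) = A i j" for i j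
    by (simp add: if_distrib[of "\<lambda>x. x * _"] sum.delta cong: if_cong)
  then show ?thesis unfolding mcong_def mmul_def mat_one_def by auto
qed

lemma mmul_one_right: "mcong p n (mmul n A (mat_one n)) A"
proof -
  have "j < n \<Longrightarrow> (\<Sum>k<n. A i k * (if k < n \<and> j < n \<and> k = j then 1 else 0)) = A i j" for i j
    by (simp add: if_distrib[of "\<lambda>x. _ * x"] sum.delta' cong: if_cong)
  then show ?thesis unfolding mcong_def mmul_def mat_one_def by auto
qed

lemma sum_lessThan_double: "(\<Sum>j<2*(g::nat). (f j::int)) = (\<Sum>j<g. f j) + (\<Sum>j<g. f (j+g))"
proof -
  have "{..<2*g} = {..<g} \<union> {g..<2*g}" by auto
  then have "(\<Sum>j<2*g. f j) = sum f ({..<g} \<union> {g..<2*g})" by simp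
  also have "\<dots> = (\<Sum>j<g. f j) + (\<Sum>j\<in>{g..<2*g}. f j)"
    by (rule sum.union_disjoint) auto
  also have "(\<Sum>j\<in>{g..<2*g}. f j) = (\<Sum>j\<in>{0+g..<g+g}. f j)" by (simp add: mult_2)
  also have "\<dots> = (\<Sum>j\<in>{0..<g}. f (j+g))" by (rule sum.shift_bounds_nat_ivl)
  finally show ?thesis by (simp add: lessThan_atLeast0)
qed

lemma vmmul_Jint: "j < 2*g \<Longrightarrow> vmmul (2*g) v (Jint g) j = symp_row g v j"
proof (cases "j < g")
  case True
  assume j: "j < 2*g"
  have "vmmul (2*g) v (Jint g) j = (\<Sum>k<2*g. v k * (if k = j+g then -1 else 0))"
    unfolding vmmul_def Jint_def using True by (intro sum.cong) auto
  also have "\<dots> = - v (j+g)" using True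
    by (simp add: if_distrib[of "\<lambda>x. _ * x"] sum.delta' cong: if_cong)
  finally show ?thesis using True by (simp add: symp_row_def)
next
  case False
  assume j: "j < 2*g"
  have "vmmul (2*g) v (Jint g) j = (\<Sum>k<2*g. v k * (if k = j-g then 1 else 0))"
    unfolding vmmul_def Jint_def using False j by (intro sum.cong) auto
  also have "\<dots> = v (j-g)" using False j
    by (simp add: if_distrib[of "\<lambda>x. _ * x"] sum.delta' cong: if_cong)
  finally show ?thesis using False j by (simp add: symp_row_def)
qed

lemma mvmul_Jint: "i < 2*g \<Longrightarrow> mvmul (2*g) (Jint g) u i = - symp_row g u i"
proof (cases "i < g")
  case True
  have "mvmul (2*g) (Jint g) u i = (\<Sum>k<2*g. (if k = i+g then 1 else 0) * u k)"
    unfolding mvmul_def Jint_def using True by (intro sum.cong) auto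
  also have "\<dots> = u (i+g)" using True
    by (simp add: if_distrib[of "\<lambda>x. x * _"] sum.delta cong: if_cong)
  finally show ?thesis using True by (simp add: symp_row_def)
next
  case False
  assume i: "i < 2*g"
  have "mvmul (2*g) (Jint g) u i = (\<Sum>k<2*g. (if k = i-g then -1 else 0) * u k)"
    unfolding mvmul_def Jint_def using False i by (intro sum.cong) auto
  also have "\<dots> = - u (i-g)" using False i
    by (simp add: if_distrib[of "\<lambda>x. x * _"] sum.delta cong: if_cong)
  finally show ?thesis using False i by (simp add: symp_row_def)
qed

lemma symp_eq_row: "symp g u v = (\<Sum>j<2*g. symp_row g u j * v j)"
  unfolding symp_def sum_lessThan_double
    by (simp add: symp_row_def sum_subtractf[symmetric] sum.distrib[symmetric] algebra_simps)

lemma symp_eq_vmmul: "symp g u v = (\<Sum>j<2*g. vmmul (2*g) u (Jint g) j * v j)"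
  unfolding symp_eq_row by (intro sum.cong) (auto simp: vmmul_Jint)

lemma symp_antisym: "symp g u v = - symp g v u"
  unfolding symp_def by (simp add: sum_negf[symmetric] algebra_simps)

lemma symp_self[simp]: "symp g u u = 0"
  using symp_antisym[of g u u] by simp

lemma symp_add_left: "symp g (u + v) w = symp g u w + symp g v w"
  unfolding symp_def plus_fun_def by (simp add: sum.distrib[symmetric] algebra_simps)

lemma symp_add_right: "symp g w (u + v) = symp g w u + symp g w v"
  unfolding symp_def plus_fun_def by (simp add: sum.distrib[symmetric] algebra_simps)

lemma symp_vsmult_left: "symp g (vsmult c u) w = c * symp g u w"
  unfolding symp_def vsmult_def by (simp add: sum_distrib_left algebra_simps)

lemma symp_vsmult_right: "symp g w (vsmult c u) = c * symp g w u"
  unfolding symp_def vsmult_def by (simp add: sum_distrib_left algebra_simps)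

lemma symp_vcong:
  assumes "vcong p (2*g) u u'" "vcong p (2*g) v v'"
  shows "symp g u v mod int p = symp g u' v' mod int p"
  unfolding symp_def cong_def[symmetric]
proof (intro cong_sum)
  fix i assume "i \<in> {..<g}"
  then have "[u i = u' i] (mod int p)" "[v (i+g) = v' (i+g)] (mod int p)"
    "[u (i+g) = u' (i+g)] (mod int p)" "[v i = v' i] (mod int p)"
    using assms by (auto simp: vcong_def cong_def)
  then show "[u i * v (i+g) - u (i+g) * v i = u' i * v' (i+g) - u' (i+g) * v' i] (mod int p)"
    by (intro cong_diff cong_mult)
qed

lemma J_mat_eq: "J_mat p g = (\<lambda>i j. Jint g i j mod int p)"
  by (auto simp: J_mat_def Jint_def intro!: ext)

lemma mcong_J_mat: "mcong p (2*g) (J_mat p g) (Jint g)" by (simp add: mcong_def J_mat_eq)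

lemma is_mat_J: "1 < p \<Longrightarrow> is_mat p (2*g) (J_mat p g)"
  by (auto simp: is_mat_def J_mat_eq Jint_def)

lemma is_mat_one: assumes "1 < p" shows "is_mat p n (mat_one n)"
  using assms by (auto simp: is_mat_def mat_one_def)

lemma is_mat_zero: "0 < p \<Longrightarrow> is_mat p n mat_zero"
  by (auto simp: is_mat_def mat_zero_def)

lemma mtransp_Jint: "mtransp (Jint g) = msmult (-1) (Jint g)"
  by (auto simp: mtransp_def msmult_def Jint_def intro!: ext)

lemma Jint_square: "mcong p (2*g) (mmul (2*g) (Jint g) (Jint g)) (msmult (-1) (mat_one (2*g)))"
proof -
  have "i < 2*g \<Longrightarrow> mmul (2*g) (Jint g) (Jint g) i j = - symp_row g (\<lambda>k. Jint g k j) i" for i j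
    using mvmul_Jint[of i g "\<lambda>k. Jint g k j"] by (simp add: mmul_def mvmul_def)
  then have "i < 2*g \<Longrightarrow> j < 2*g
      \<Longrightarrow> mmul (2*g) (Jint g) (Jint g) i j = msmult (-1) (mat_one (2*g)) i j" for i j
    by (auto simp: symp_row_def Jint_def msmult_def mat_one_def)
  then show ?thesis by (simp add: mcong_def)
qed

lemma mat_zero_eq: "mat_zero = 0" by (auto simp: mat_zero_def zero_fun_def)

lemma mat_red_eq_0_iff: "0 < p \<Longrightarrow> mat_red p n X = 0 \<longleftrightarrow> mcong p n X 0"
proof
  assume "mat_red p n X = 0" then show "mcong p n X 0" using mcong_mat_red[of p n X]
    by (simp add: mcong_sym)
next
  assume a: "0 < p" "mcong p n X 0"
  show "mat_red p n X = 0"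
    by (rule mcong_imp_eq[of p n]) (use a is_mat_mat_red[of p n X] is_mat_zero[of p n]
        mcong_mat_red[of p n X] in
         \<open>auto simp: mat_zero_eq intro: mcong_trans\<close>)
qed

lemma sp_lie_iff: assumes "1 < p"
  shows "M \<in> sp_lie p g \<longleftrightarrow> is_mat p (2*g) M \<and>
     mcong p (2*g) (mmul (2*g) (mtransp M) (Jint g) + mmul (2*g) (Jint g) M) 0"
proof -
  have e: "mat_add p (2*g) (mat_mul p (2*g) (mat_trans (2*g) M) (J_mat p g)) (mat_mul p (2*g)
      (J_mat p g) M)
        = mat_red p (2*g) (mat_red p (2*g) (mmul (2*g) (mat_trans (2*g) M) (J_mat p g))
            + mat_red p (2*g) (mmul (2*g) (J_mat p g) M))"
    by (simp add: mat_add_eq_red mat_mul_eq_red)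
  have c: "mcong p (2*g) (mat_red p (2*g) (mmul (2*g) (mat_trans (2*g) M) (J_mat p g))
      + mat_red p (2*g) (mmul (2*g) (J_mat p g) M))
      (mmul (2*g) (mtransp M) (Jint g) + mmul (2*g) (Jint g) M)"
    by (intro mcong_add mcong_trans[OF mcong_mat_red] mcong_mmul mcong_mat_trans mcong_J_mat
        mcong_refl)
  have "mcong p (2*g) (mat_red p (2*g) (mmul (2*g) (mat_trans (2*g) M) (J_mat p g))
      + mat_red p (2*g) (mmul (2*g) (J_mat p g) M)) 0
     \<longleftrightarrow> mcong p (2*g) (mmul (2*g) (mtransp M) (Jint g) + mmul (2*g) (Jint g) M) 0"
    using c by (meson mcong_sym mcong_trans)
  moreover have "mat_red p (2*g) (mat_red p (2*g) (mmul (2*g) (mat_trans (2*g) M) (J_mat p g))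
      + mat_red p (2*g) (mmul (2*g) (J_mat p g) M)) = 0
     \<longleftrightarrow> mcong p (2*g) (mat_red p (2*g) (mmul (2*g) (mat_trans (2*g) M) (J_mat p g))
         + mat_red p (2*g) (mmul (2*g) (J_mat p g) M)) 0"
    using assms by (intro mat_red_eq_0_iff) auto
  ultimately show ?thesis unfolding sp_lie_def mem_Collect_eq e mat_zero_eq by blast
qed

lemma Sp_grp_iff: assumes "1 < p"
  shows "X \<in> Sp_grp p g \<longleftrightarrow> is_mat p (2*g) X \<and> mcong p (2*g) (mmul (2*g) (mtransp X) (mmul (2*g)
      (Jint g) X)) (Jint g)"
proof -
  have c: "mcong p (2*g) (mat_mul p (2*g) (mat_trans (2*g) X) (mat_mul p (2*g) (J_mat p g) X))
           (mmul (2*g) (mtransp X) (mmul (2*g) (Jint g) X))"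
    unfolding mat_mul_eq_red
    by (intro mcong_trans[OF mcong_mat_red] mcong_mmul mcong_mat_trans mcong_J_mat mcong_refl)
  have im: "is_mat p (2*g) (mat_mul p (2*g) (mat_trans (2*g) X) (mat_mul p (2*g) (J_mat p g) X))"
    using assms by (simp add: mat_mul_eq_red is_mat_mat_red)
  show ?thesis unfolding Sp_grp_def
  proof (safe)
    assume "mat_mul p (2*g) (mat_trans (2*g) X) (mat_mul p (2*g) (J_mat p g) X) = J_mat p g"
    then show "mcong p (2*g) (mmul (2*g) (mtransp X) (mmul (2*g) (Jint g) X)) (Jint g)"
      using c mcong_J_mat by (metis mcong_sym mcong_trans)
  next
    assume "mcong p (2*g) (mmul (2*g) (mtransp X) (mmul (2*g) (Jint g) X)) (Jint g)"
    then show "mat_mul p (2*g) (mat_trans (2*g) X) (mat_mul p (2*g) (J_mat p g) X) = J_mat p g"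
      using c mcong_J_mat im is_mat_J[OF assms] by (metis mcong_imp_eq mcong_sym mcong_trans)
  qed
qed

definition unit_vec :: "nat \<Rightarrow> nat \<Rightarrow> int" where
  "unit_vec k = (\<lambda>i. if i = k then 1 else 0)"

text \<open>\<open>sym_sq p g u = u u\<^sup>T J\<close> plays the role of the square \<open>u\<^sup>2\<close> in \<open>Sym\<^sup>2 V \<cong> sp\<^sub>2\<^sub>g\<close>:
  these matrices span \<open>sp\<^sub>2\<^sub>g(p)\<close> additively and conjugation by \<open>X\<close> sends the one of \<open>u\<close>
  to the one of \<open>X u\<close> (\<open>sp_lie_induct\<close>, \<open>mat_conj_sym_sq\<close>).\<close>

definition sym_sq :: "nat \<Rightarrow> nat \<Rightarrow> (nat \<Rightarrow> int) \<Rightarrow> mat" where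
  "sym_sq p g u = mat_red p (2*g) (outer u (symp_row g u))"

definition sym_prod :: "nat \<Rightarrow> nat \<Rightarrow> (nat \<Rightarrow> int) \<Rightarrow> (nat \<Rightarrow> int) \<Rightarrow> mat" where
  "sym_prod p g u v = mat_red p (2*g) (outer u (symp_row g v) + outer v (symp_row g u))"

definition mat_nsmult :: "nat \<Rightarrow> nat \<Rightarrow> nat \<Rightarrow> mat \<Rightarrow> mat" where
  "mat_nsmult p n k A = mat_red p n (msmult (int k) A)"

lemma vcong_refl[simp]: "vcong p n u u" by (simp add: vcong_def)

lemma vcong_sym: "vcong p n u v \<Longrightarrow> vcong p n v u" by (simp add: vcong_def)

lemma vcong_trans [trans]: "vcong p n u v \<Longrightarrow> vcong p n v w \<Longrightarrow> vcong p n u w" by (simp add: vcong_def)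

lemma vcong_add: "vcong p n u u' \<Longrightarrow> vcong p n v v' \<Longrightarrow> vcong p n (u+v) (u'+v')"
  unfolding vcong_def plus_fun_def by (metis mod_add_cong)

lemma vcong_vsmult_scalar: "c mod int p = d mod int p \<Longrightarrow> vcong p n (vsmult c u) (vsmult d u)"
  unfolding vcong_def vsmult_def by (metis mod_mult_cong)

lemma mcong_outer: "vcong p n u u' \<Longrightarrow> vcong p n v v' \<Longrightarrow> mcong p n (outer u v) (outer u' v')"
  unfolding vcong_def mcong_def outer_def by (metis mod_mult_cong)

lemma vcong_symp_row: "vcong p (2*g) u u' \<Longrightarrow> vcong p (2*g) (symp_row g u) (symp_row g u')"
  unfolding vcong_def symp_row_def by (auto intro: mod_minus_cong)

lemma vcong_vmmul_Jint: "vcong p (2*g) (vmmul (2*g) b (Jint g)) (symp_row g b)"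
  by (simp add: vcong_def vmmul_Jint)

lemma vcong_mvmul_Jint: "vcong p (2*g) (mvmul (2*g) (Jint g) b) (vsmult (-1) (symp_row g b))"
  by (simp add: vcong_def mvmul_Jint vsmult_def)

lemma mcong_mat_red_iff: "mcong p n (mat_red p n A) B \<longleftrightarrow> mcong p n A B"
  by (simp add: mcong_def mat_red_def)

lemma mat_red_cong: assumes "0 < p" "mcong p n A B" shows "mat_red p n A = mat_red p n B"
proof (rule mcong_imp_eq[of p n])
  show "mcong p n (mat_red p n A) (mat_red p n B)"
    using assms(2) mcong_mat_red[of p n A] mcong_mat_red[of p n B]
    by (meson mcong_sym mcong_trans)
qed (use assms is_mat_mat_red in auto)

lemma mmul_outer_Jint: "mcong p (2*g) (mmul (2*g) (outer a b) (Jint g)) (outer a (symp_row g b))"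
  unfolding mmul_outer_left by (intro mcong_outer vcong_refl vcong_vmmul_Jint)

lemma sp_defect_outer: "mcong p (2*g) (mmul (2*g) (mtransp (outer a (symp_row g b))) (Jint g)
    + mmul (2*g) (Jint g) (outer a (symp_row g b)))
     (outer (symp_row g b) (symp_row g a) - outer (symp_row g a) (symp_row g b))"
proof -
  have "mcong p (2*g) (mmul (2*g) (mtransp (outer a (symp_row g b))) (Jint g) + mmul (2*g) (Jint g)
      (outer a (symp_row g b)))
     (outer (symp_row g b) (symp_row g a) + outer (vsmult (-1) (symp_row g a)) (symp_row g b))"
    unfolding mtransp_outer mmul_outer_left mmul_outer_right
    by (intro mcong_add mcong_outer vcong_refl vcong_vmmul_Jint vcong_mvmul_Jint)
  moreover have "outer (symp_row g b) (symp_row g a) + outer (vsmult (-1) (symp_row g a))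
      (symp_row g b) = outer (symp_row g b) (symp_row g a) - outer (symp_row g a) (symp_row g b)"
    by (auto simp: outer_def vsmult_def plus_fun_def fun_diff_def)
  ultimately show ?thesis by simp
qed

lemma sym_sq_in_sp_lie: assumes "1 < p" shows "sym_sq p g u \<in> sp_lie p g"
proof -
  have "mcong p (2*g) (mmul (2*g) (mtransp (sym_sq p g u)) (Jint g) + mmul (2*g) (Jint g)
      (sym_sq p g u))
     (mmul (2*g) (mtransp (outer u (symp_row g u))) (Jint g) + mmul (2*g) (Jint g) (outer u
         (symp_row g u)))"
    unfolding sym_sq_def by (intro mcong_add mcong_mmul mcong_mtransp mcong_mat_red mcong_refl)
  then have "mcong p (2*g) (mmul (2*g) (mtransp (sym_sq p g u)) (Jint g) + mmul (2*g) (Jint g)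
      (sym_sq p g u)) (outer (symp_row g u) (symp_row g u) - outer (symp_row g u) (symp_row g u))"
    using sp_defect_outer by (rule mcong_trans)
  then show ?thesis using assms by (auto simp: sp_lie_iff sym_sq_def is_mat_mat_red)
qed

lemma mcong_mmul_left: "mcong p n A A' \<Longrightarrow> mcong p n (mmul n A B) (mmul n A' B)"
  by (intro mcong_mmul mcong_refl)

lemma mcong_mmul_right: "mcong p n B B' \<Longrightarrow> mcong p n (mmul n A B) (mmul n A B')"
  by (intro mcong_mmul mcong_refl)

lemma mcong_msmult_scalar: "c mod int p = d mod int p \<Longrightarrow> mcong p n (msmult c A) (msmult d A)"
  unfolding mcong_def msmult_def by (metis mod_mult_cong)

lemma mcong_neg_of_sum: assumes "mcong p n (msmult (-1) X + msmult (-1) Y) 0"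
  shows "mcong p n X (msmult (-1) Y)"
  unfolding mcong_def
proof (intro allI impI)
  fix i j assume "i < n" "j < n"
  then have "(- X i j - Y i j) mod int p = 0" using assms
    by (simp add: mcong_def msmult_def plus_fun_def)
  then have "int p dvd (- X i j - Y i j)" by (simp add: mod_eq_0_iff_dvd)
  then have "int p dvd (X i j - (- Y i j))"
    by (metis dvd_minus_iff minus_diff_eq diff_minus_eq_add add.commute)
  then show "X i j mod int p = msmult (- 1) Y i j mod int p"
    by (simp add: msmult_def mod_eq_dvd_iff)
qed

lemma sym_prod_commute: "sym_prod p g u v = sym_prod p g v u"
  by (simp add: sym_prod_def add.commute)

lemma sym_prod_in_sp_lie: assumes "1 < p" shows "sym_prod p g u v \<in> sp_lie p g"
proof -
  have "mcong p (2*g) (mmul (2*g) (mtransp (sym_prod p g u v)) (Jint g) + mmul (2*g) (Jint g)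
      (sym_prod p g u v))
     ((mmul (2*g) (mtransp (outer u (symp_row g v))) (Jint g) + mmul (2*g) (Jint g) (outer u
         (symp_row g v))) +
      (mmul (2*g) (mtransp (outer v (symp_row g u))) (Jint g) + mmul (2*g) (Jint g) (outer v
          (symp_row g u))))"
  proof -
    have "mcong p (2*g) (mmul (2*g) (mtransp (sym_prod p g u v)) (Jint g) + mmul (2*g) (Jint g)
        (sym_prod p g u v))
       (mmul (2*g) (mtransp (outer u (symp_row g v) + outer v (symp_row g u))) (Jint g)
           + mmul (2*g) (Jint g) (outer u (symp_row g v) + outer v (symp_row g u)))"
      unfolding sym_prod_def by (intro mcong_add mcong_mmul mcong_mtransp mcong_mat_red mcong_refl)
    then show ?thesis by (simp add: mtransp_add mmul_add_left mmul_add_right algebra_simps)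
  qed
  then have "mcong p (2*g) (mmul (2*g) (mtransp (sym_prod p g u v)) (Jint g) + mmul (2*g) (Jint g)
      (sym_prod p g u v))
     ((outer (symp_row g v) (symp_row g u) - outer (symp_row g u) (symp_row g v))
         + (outer (symp_row g u) (symp_row g v) - outer (symp_row g v) (symp_row g u)))"
    using mcong_add[OF sp_defect_outer sp_defect_outer] mcong_trans by blast
  then show ?thesis using assms by (auto simp: sp_lie_iff sym_prod_def is_mat_mat_red)
qed

lemma sp_lie_mat_add: assumes "1 < p" "A \<in> sp_lie p g" "B \<in> sp_lie p g"
  shows "mat_add p (2*g) A B \<in> sp_lie p g"
proof -
  have a: "mcong p (2*g) (mmul (2*g) (mtransp A) (Jint g) + mmul (2*g) (Jint g) A) 0"
   and b: "mcong p (2*g) (mmul (2*g) (mtransp B) (Jint g) + mmul (2*g) (Jint g) B) 0" using assms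
     by (auto simp: sp_lie_iff)
  have "mcong p (2*g) (mmul (2*g) (mtransp (mat_add p (2*g) A B)) (Jint g) + mmul (2*g) (Jint g)
      (mat_add p (2*g) A B))
      (mmul (2*g) (mtransp (A+B)) (Jint g) + mmul (2*g) (Jint g) (A+B))"
    unfolding mat_add_eq_red by (intro mcong_add mcong_mmul mcong_mtransp mcong_mat_red mcong_refl)
  also have "(mmul (2*g) (mtransp (A+B)) (Jint g) + mmul (2*g) (Jint g) (A+B)) =
     (mmul (2*g) (mtransp A) (Jint g) + mmul (2*g) (Jint g) A) + (mmul (2*g) (mtransp B) (Jint g)
         + mmul (2*g) (Jint g) B)"
    by (simp add: mtransp_add mmul_add_left mmul_add_right algebra_simps)
  finally have "mcong p (2*g) (mmul (2*g) (mtransp (mat_add p (2*g) A B)) (Jint g)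
      + mmul (2*g) (Jint g) (mat_add p (2*g) A B)) (0+0)"
    using mcong_add[OF a b] mcong_trans by blast
  then show ?thesis using assms by (auto simp: sp_lie_iff mat_add_eq_red is_mat_mat_red)
qed

lemma zero_in_sp_lie: "1 < p \<Longrightarrow> 0 \<in> sp_lie p g"
  by (auto simp: sp_lie_iff is_mat_def mtransp_def zero_fun_def mcong_def mmul_def)

lemma sym_sq_zero: "sym_sq p g 0 = 0"
  by (auto simp: sym_sq_def mat_red_def outer_def zero_fun_def intro!: ext)

lemma mat_nsmult_0: "mat_nsmult p n 0 A = 0"
  by (auto simp: mat_nsmult_def mat_red_def msmult_def zero_fun_def intro!: ext)

lemma mat_nsmult_Suc: "0 < p \<Longrightarrow> mat_nsmult p n (Suc k) A = mat_add p n (mat_nsmult p n k A) A"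
  unfolding mat_nsmult_def mat_add_eq_red
  by (rule mat_red_cong) (auto simp: mcong_def mat_red_def msmult_def plus_fun_def algebra_simps
      mod_add_left_eq mod_add_right_eq)

lemma mat_nsmult_in_sp_lie: assumes "1 < p" "P 0" "\<And>A B. A \<in> sp_lie p g \<Longrightarrow> B \<in> sp_lie p g \<Longrightarrow> P A
    \<Longrightarrow> P B \<Longrightarrow> P (mat_add p (2*g) A B)"
  "A \<in> sp_lie p g" "P A"
  shows "mat_nsmult p (2*g) k A \<in> sp_lie p g \<and> P (mat_nsmult p (2*g) k A)"
proof (induction k)
  case 0 show ?case by (simp only: mat_nsmult_0) (use assms zero_in_sp_lie in blast)
next
  case (Suc k) then show ?case using assms by (simp add: mat_nsmult_Suc sp_lie_mat_add)
qed

lemma mcong_mat_add: "mcong p n (mat_add p n A B) (A + B)" unfolding mat_add_eq_red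
  by (rule mcong_mat_red)

lemma mcong_sym_sq: "mcong p (2*g) (sym_sq p g u) (outer u (symp_row g u))" unfolding sym_sq_def
  by (rule mcong_mat_red)

lemma mcong_sym_prod: "mcong p (2*g) (sym_prod p g u v) (outer u (symp_row g v)
    + outer v (symp_row g u))" unfolding sym_prod_def by (rule mcong_mat_red)

lemma mcong_mat_nsmult: "mcong p n (mat_nsmult p n k A) (msmult (int k) A)"
  unfolding mat_nsmult_def by (rule mcong_mat_red)

lemma sym_prod_polarization: assumes "1 < p"
  shows "sym_prod p g a b = mat_add p (2*g) (sym_sq p g (a+b)) (mat_add p (2*g) (mat_nsmult p (2*g)
      (p-1) (sym_sq p g a)) (mat_nsmult p (2*g) (p-1) (sym_sq p g b)))"
proof (rule mcong_imp_eq[of p "2*g"])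
  show "is_mat p (2*g) (sym_prod p g a b)" using assms by (simp add: sym_prod_def is_mat_mat_red)
  show "is_mat p (2*g) (mat_add p (2*g) (sym_sq p g (a+b)) (mat_add p (2*g) (mat_nsmult p (2*g)
      (p-1) (sym_sq p g a)) (mat_nsmult p (2*g) (p-1) (sym_sq p g b))))"
    using assms by (simp add: mat_add_eq_red is_mat_mat_red)
  have r: "mcong p (2*g) (mat_add p (2*g) (sym_sq p g (a+b)) (mat_add p (2*g) (mat_nsmult p (2*g)
      (p-1) (sym_sq p g a)) (mat_nsmult p (2*g) (p-1) (sym_sq p g b))))
     (outer (a+b) (symp_row g (a+b)) + (msmult (int (p-1)) (outer a (symp_row g a))
         + msmult (int (p-1)) (outer b (symp_row g b))))"
    by (rule mcong_trans[OF mcong_mat_add]) (intro mcong_add mcong_sym_sq mcong_trans[OF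
        mcong_mat_add] mcong_trans[OF mcong_mat_nsmult] mcong_msmult)
  have e: "mcong p (2*g) (outer a (symp_row g b) + outer b (symp_row g a))
     (outer (a+b) (symp_row g (a+b)) + (msmult (int (p-1)) (outer a (symp_row g a))
         + msmult (int (p-1)) (outer b (symp_row g b))))"
    unfolding mcong_def
  proof (intro allI impI)
    fix i j
    have "(outer (a+b) (symp_row g (a+b)) + (msmult (int (p-1)) (outer a (symp_row g a))
        + msmult (int (p-1)) (outer b (symp_row g b)))) i j
       = (outer a (symp_row g b) + outer b (symp_row g a)) i j + int p * (a i * symp_row g a j
           + b i * symp_row g b j)"
      using assms by (simp add: outer_def msmult_def symp_row_def plus_fun_def of_nat_diff
          algebra_simps)
    then show "(outer a (symp_row g b) + outer b (symp_row g a)) i j mod int p =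
        (outer (a+b) (symp_row g (a+b)) + (msmult (int (p-1)) (outer a (symp_row g a))
            + msmult (int (p-1)) (outer b (symp_row g b)))) i j mod int p"
      by simp
  qed
  show "mcong p (2*g) (sym_prod p g a b) (mat_add p (2*g) (sym_sq p g (a+b)) (mat_add p (2*g)
      (mat_nsmult p (2*g) (p-1) (sym_sq p g a)) (mat_nsmult p (2*g) (p-1) (sym_sq p g b))))"
    using mcong_trans[OF mcong_sym_prod e] r mcong_sym mcong_trans by blast
qed

lemma sym_prod_induct: assumes "1 < p" "\<And>u. P (sym_sq p g u)"
   "\<And>A B. A \<in> sp_lie p g \<Longrightarrow> B \<in> sp_lie p g \<Longrightarrow> P A \<Longrightarrow> P B \<Longrightarrow> P (mat_add p (2*g) A B)"
  shows "P (sym_prod p g a b)"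
proof -
  have z: "P 0" using assms(2)[of 0] by (simp add: sym_sq_zero)
  have k: "mat_nsmult p (2*g) k (sym_sq p g u) \<in> sp_lie p g \<and> P (mat_nsmult p (2*g) k
      (sym_sq p g u))" for k u
    by (rule mat_nsmult_in_sp_lie[where P=P, OF assms(1) z]) (use assms sym_sq_in_sp_lie in auto)
  show ?thesis unfolding sym_prod_polarization[OF assms(1)]
    using assms k sym_sq_in_sp_lie sp_lie_mat_add by metis
qed

lemma eq_imp_mcong: "A = B \<Longrightarrow> mcong p n A B" by simp

definition sym_of :: "nat \<Rightarrow> mat \<Rightarrow> mat" where
  "sym_of g M = msmult (-1) (mmul (2*g) M (Jint g))"

lemma sym_of_mmul_Jint: "mcong p (2*g) (mmul (2*g) (sym_of g M) (Jint g)) M"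
proof -
  have "mcong p (2*g) (mmul (2*g) (sym_of g M) (Jint g)) (msmult (-1) (mmul (2*g) M (mmul (2*g)
      (Jint g) (Jint g))))"
    by (rule eq_imp_mcong) (simp add: sym_of_def mmul_msmult_left mmul_assoc)
  also have "mcong p (2*g) \<dots> (msmult (-1) (mmul (2*g) M (msmult (-1) (mat_one (2*g)))))"
    by (intro mcong_msmult mcong_mmul_right Jint_square)
  also have "mcong p (2*g) \<dots> (mmul (2*g) M (mat_one (2*g)))"
    by (rule eq_imp_mcong) (simp add: mmul_msmult_right msmult_msmult)
  also have "mcong p (2*g) \<dots> M" by (rule mmul_one_right)
  finally show ?thesis .
qed

lemma sym_of_symmetric: assumes "1 < p" "M \<in> sp_lie p g"
  shows "mcong p (2*g) (mtransp (sym_of g M)) (sym_of g M)"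
proof -
  let ?n = "2*g" and ?J = "Jint g"
  let ?E = "mmul ?n (mtransp M) ?J + mmul ?n ?J M"
  have E: "mcong p ?n ?E 0" using assms by (simp add: sp_lie_iff)
  have "mcong p ?n (mmul ?n ?J (mmul ?n ?E ?J)) (mmul ?n ?J (mmul ?n (mtransp M) (mmul ?n ?J ?J))
      + mmul ?n (mmul ?n ?J ?J) (mmul ?n M ?J))"
    by (rule eq_imp_mcong) (simp add: mmul_add_left mmul_add_right mmul_assoc)
  also have "mcong p ?n \<dots> (mmul ?n ?J (mmul ?n (mtransp M) (msmult (-1) (mat_one ?n)))
      + mmul ?n (msmult (-1) (mat_one ?n)) (mmul ?n M ?J))"
    by (intro mcong_add mcong_mmul_right mcong_mmul_left Jint_square)
  also have "mcong p ?n \<dots> (msmult (-1) (mmul ?n ?J (mmul ?n (mtransp M) (mat_one ?n)))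
      + msmult (-1) (mmul ?n (mat_one ?n) (mmul ?n M ?J)))"
    by (rule eq_imp_mcong) (simp add: mmul_msmult_left mmul_msmult_right)
  also have "mcong p ?n \<dots> (msmult (-1) (mmul ?n ?J (mtransp M)) + msmult (-1) (mmul ?n M ?J))"
    by (intro mcong_add mcong_msmult mcong_mmul_right mmul_one_right mmul_one_left)
  finally have 1: "mcong p ?n (mmul ?n ?J (mmul ?n ?E ?J)) (msmult (-1) (mmul ?n ?J (mtransp M))
      + msmult (-1) (mmul ?n M ?J))" .
  have 2: "mcong p ?n (mmul ?n ?J (mmul ?n ?E ?J)) 0"
    using mcong_mmul_right[OF mcong_mmul_left[OF E, of ?J], of ?J]
      by (simp add: mmul_def zero_fun_def mcong_def)
  have "mcong p ?n (msmult (-1) (mmul ?n ?J (mtransp M)) + msmult (-1) (mmul ?n M ?J)) 0"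
    using 1 2 by (meson mcong_sym mcong_trans)
  then have 3: "mcong p ?n (mmul ?n ?J (mtransp M)) (sym_of g M)" unfolding sym_of_def
    by (rule mcong_neg_of_sum)
  have "mtransp (sym_of g M) = mmul ?n ?J (mtransp M)"
    by (simp add: sym_of_def mtransp_msmult mtransp_mmul mtransp_Jint mmul_msmult_left
        msmult_msmult)
  then show ?thesis using 3 by simp
qed

definition lower_col :: "mat \<Rightarrow> nat \<Rightarrow> nat \<Rightarrow> int" where
  "lower_col S i = (\<lambda>k. if i < k then S k i else 0)"

definition hook :: "mat \<Rightarrow> nat \<Rightarrow> mat" where
  "hook S i = outer (unit_vec i) (lower_col S i) + outer (lower_col S i) (unit_vec i)
    + msmult (S i i) (outer (unit_vec i) (unit_vec i))"

primrec hook_sum :: "mat \<Rightarrow> nat \<Rightarrow> mat" where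
  "hook_sum S 0 = 0" | "hook_sum S (Suc k) = hook_sum S k + hook S k"

lemma hook_sum_entry: "hook_sum S k a b = (\<Sum>i<k. hook S i a b)"
  by (induction k) (auto simp: plus_fun_def zero_fun_def)

lemma hook_sum_full: assumes "mcong p n (mtransp S) S" shows "mcong p n (hook_sum S n) S"
  unfolding mcong_def
proof (intro allI impI)
  fix a b assume ab: "a < n" "b < n"
  have "hook_sum S n a b = (\<Sum>i<n. unit_vec i a * lower_col S i b + lower_col S i a * unit_vec i b
      + S i i * (unit_vec i a * unit_vec i b))"
    unfolding hook_sum_entry by (simp add: hook_def outer_def msmult_def plus_fun_def)
  also have "\<dots> = lower_col S a b + lower_col S b a + (if a = b then S a a else 0)"
    using ab by (simp add: sum.distrib unit_vec_def if_distrib[of "\<lambda>x. x * _"] if_distrib[of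
        "\<lambda>x. _ * x"] sum.delta sum.delta' cong: if_cong)
  finally have e: "hook_sum S n a b = lower_col S a b + lower_col S b a + (if a
      = b then S a a else 0)" .
  have s: "S b a mod int p = S a b mod int p" using assms ab by (auto simp: mcong_def mtransp_def)
  show "hook_sum S n a b mod int p = S a b mod int p"
    unfolding e lower_col_def using s by (cases a b rule: linorder_cases) auto
qed

lemma mat_red_hook_Jint:
  assumes "0 < p"
  shows "mat_red p (2*g) (mmul (2*g) (hook S k) (Jint g))
    = mat_add p (2*g) (sym_prod p g (unit_vec k) (lower_col S k))
        (mat_nsmult p (2*g) (nat (S k k mod int p)) (sym_sq p g (unit_vec k)))"
proof (rule mcong_imp_eq[of p "2*g"])
  let ?n = "2*g" and ?J = "Jint g" and ?e = "unit_vec k" and ?c = "lower_col S k"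
  have "mcong p ?n (mmul ?n (hook S k) ?J) (mmul ?n (outer ?e ?c) ?J + mmul ?n (outer ?c ?e) ?J
      + msmult (S k k) (mmul ?n (outer ?e ?e) ?J))"
    by (rule eq_imp_mcong) (simp add: hook_def mmul_add_left mmul_msmult_left)
  also have "mcong p ?n \<dots> (outer ?e (symp_row g ?c) + outer ?c (symp_row g ?e)
      + msmult (int (nat (S k k mod int p))) (outer ?e (symp_row g ?e)))"
    by (intro mcong_add mmul_outer_Jint mcong_trans[OF mcong_msmult[OF mmul_outer_Jint]]
        mcong_msmult_scalar) (use assms in simp)
  also have "mcong p ?n \<dots> (mat_add p ?n (sym_prod p g ?e ?c) (mat_nsmult p ?n (nat
      (S k k mod int p)) (sym_sq p g ?e)))"
    by (rule mcong_sym, rule mcong_trans[OF mcong_mat_add])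
      (intro mcong_add mcong_sym_prod mcong_trans[OF mcong_mat_nsmult] mcong_msmult mcong_sym_sq)
  finally show "mcong p ?n (mat_red p ?n (mmul ?n (hook S k) ?J))
      (mat_add p ?n (sym_prod p g ?e ?c) (mat_nsmult p ?n (nat (S k k mod int p)) (sym_sq p g ?e)))"
    by (simp add: mcong_mat_red_iff)
qed (use assms in \<open>simp_all add: is_mat_mat_red mat_add_eq_red\<close>)

lemma mat_red_hook_sum_Suc:
  "0 < p \<Longrightarrow> mat_red p (2*g) (mmul (2*g) (hook_sum S (Suc k)) (Jint g))
    = mat_add p (2*g) (mat_red p (2*g) (mmul (2*g) (hook_sum S k) (Jint g)))
        (mat_red p (2*g) (mmul (2*g) (hook S k) (Jint g)))"
  unfolding mat_add_eq_red hook_sum.simps mmul_add_left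
  by (rule mat_red_cong) (auto intro: mcong_sym[OF mcong_add] mcong_mat_red)

lemma mat_red_hook_sum_sym_of:
  assumes "1 < p" "M \<in> sp_lie p g"
  shows "mat_red p (2*g) (mmul (2*g) (hook_sum (sym_of g M) (2*g)) (Jint g)) = M"
proof (rule mcong_imp_eq[of p "2*g"])
  let ?n = "2*g" and ?J = "Jint g" and ?S = "sym_of g M"
  have "mcong p ?n (mat_red p ?n (mmul ?n (hook_sum ?S ?n) ?J)) (mmul ?n (hook_sum ?S ?n) ?J)"
    by (rule mcong_mat_red)
  also have "mcong p ?n \<dots> (mmul ?n ?S ?J)"
    by (intro mcong_mmul_left hook_sum_full sym_of_symmetric assms)
  also have "mcong p ?n \<dots> M" by (rule sym_of_mmul_Jint)
  finally show "mcong p ?n (mat_red p ?n (mmul ?n (hook_sum ?S ?n) ?J)) M" .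
qed (use assms in \<open>auto simp: is_mat_mat_red sp_lie_iff\<close>)

text \<open>Every \<open>M \<in> sp\<close> is \<open>S J\<close> for the symmetric matrix \<open>S = -M J\<close>; splitting \<open>S\<close> into hooks
  (its \<open>k\<close>-th row and column from the diagonal on) writes \<open>M\<close> as a sum of polarizations
  \<open>u v + v u\<close> and multiples of squares \<open>u\<^sup>2\<close>, hence of squares alone.\<close>

lemma sp_lie_induct:
  assumes p: "1 < p" and sq: "\<And>u. P (sym_sq p g u)"
    and add: "\<And>A B. A \<in> sp_lie p g \<Longrightarrow> B \<in> sp_lie p g \<Longrightarrow> P A \<Longrightarrow> P B \<Longrightarrow> P (mat_add p (2*g) A B)"
    and M: "M \<in> sp_lie p g"
  shows "P M"
proof -
  let ?n = "2*g" and ?J = "Jint g" and ?S = "sym_of g M"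
  have "P 0" using sq[of 0] by (simp add: sym_sq_zero)
  then have "mat_nsmult p ?n m (sym_sq p g u) \<in> sp_lie p g \<and> P (mat_nsmult p ?n m
      (sym_sq p g u))" for m u
    by (rule mat_nsmult_in_sp_lie[where P=P, OF p]) (use add sq sym_sq_in_sp_lie[OF p] in auto)
  moreover have "P (sym_prod p g a b)" for a b
    by (rule sym_prod_induct[where P=P]) (use p sq add in auto)
  ultimately have hook: "mat_red p ?n (mmul ?n (hook ?S k) ?J) \<in> sp_lie p g
      \<and> P (mat_red p ?n (mmul ?n (hook ?S k) ?J))" for k
    unfolding mat_red_hook_Jint[OF order.strict_trans[OF zero_less_one p]]
    using add sym_prod_in_sp_lie[OF p] sp_lie_mat_add[OF p] by metis
  have "mat_red p ?n (mmul ?n (hook_sum ?S k) ?J) \<in> sp_lie p g \<and> P (mat_red p ?n (mmul ?n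
      (hook_sum ?S k) ?J))" for k
  proof (induction k)
    case 0
    have "mat_red p ?n (mmul ?n (hook_sum ?S 0) ?J) = sym_sq p g 0"
      by (auto simp: mat_red_def zero_fun_def mmul_def sym_sq_def outer_def intro!: ext)
    then show ?case using sq[of 0] sym_sq_in_sp_lie[OF p, of g 0] by metis
  next
    case (Suc k)
    then show ?case
      unfolding mat_red_hook_sum_Suc[OF order.strict_trans[OF zero_less_one p]]
      using hook add sp_lie_mat_add[OF p] by blast
  qed
  then show ?thesis using mat_red_hook_sum_sym_of[OF p M] by metis
qed

definition bilin :: "nat \<Rightarrow> mat \<Rightarrow> (nat \<Rightarrow> int) \<Rightarrow> (nat \<Rightarrow> int) \<Rightarrow> int" where
  "bilin n A u v = (\<Sum>i<n. \<Sum>k<n. u i * A i k * v k)"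

lemma symp_eq_bilin: "symp g u v = bilin (2*g) (Jint g) u v"
proof -
  have "symp g u v = (\<Sum>j<2*g. \<Sum>k<2*g. u k * Jint g k j * v j)"
    by (simp add: symp_eq_vmmul vmmul_def sum_distrib_right)
  also have "\<dots> = (\<Sum>k<2*g. \<Sum>j<2*g. u k * Jint g k j * v j)" by (rule sum.swap)
  finally show ?thesis by (simp add: bilin_def)
qed

lemma bilin_mvmul: "bilin n A (mvmul n X u) (mvmul n X v)
    = bilin n (mmul n (mtransp X) (mmul n A X)) u v"
proof -
  define F where "F i k a b = u a * X i a * A i k * X k b * v b" for i k a b
  have "bilin n A (mvmul n X u) (mvmul n X v) = (\<Sum>i<n. \<Sum>k<n. \<Sum>a<n. \<Sum>b<n. F i k a b)"
    unfolding bilin_def mvmul_def F_def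
    by (simp add: sum_distrib_left sum_distrib_right algebra_simps)
  also have "\<dots> = (\<Sum>i<n. \<Sum>a<n. \<Sum>k<n. \<Sum>b<n. F i k a b)"
    by (rule sum.cong[OF refl], rule sum.swap)
  also have "\<dots> = (\<Sum>a<n. \<Sum>i<n. \<Sum>k<n. \<Sum>b<n. F i k a b)"
    by (rule sum.swap)
  also have "\<dots> = (\<Sum>a<n. \<Sum>i<n. \<Sum>b<n. \<Sum>k<n. F i k a b)"
    by (rule sum.cong[OF refl], rule sum.cong[OF refl], rule sum.swap)
  also have "\<dots> = (\<Sum>a<n. \<Sum>b<n. \<Sum>i<n. \<Sum>k<n. F i k a b)"
    by (rule sum.cong[OF refl], rule sum.swap)
  also have "\<dots> = bilin n (mmul n (mtransp X) (mmul n A X)) u v"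
    unfolding bilin_def mmul_def mtransp_def F_def
    by (simp add: sum_distrib_left sum_distrib_right algebra_simps)
  finally show ?thesis .
qed

lemma bilin_unit_vec: "a < n \<Longrightarrow> b < n \<Longrightarrow> bilin n A (unit_vec a) (unit_vec b) = A a b"
  unfolding bilin_def unit_vec_def
  by (simp add: if_distrib[of "\<lambda>x. x * _"] if_distrib[of
      "\<lambda>x. _ * x"] sum.delta sum.delta' cong: if_cong)

lemma bilin_mcong:
  assumes "mcong p n A A'"
  shows "bilin n A u v mod int p = bilin n A' u v mod int p"
  unfolding bilin_def cong_def[symmetric]
proof (intro cong_sum)
  fix i k assume "i \<in> {..<n}" "k \<in> {..<n}"
  then have "[A i k = A' i k] (mod int p)" using assms by (simp add: mcong_def cong_def)
  then show "[u i * A i k * v k = u i * A' i k * v k] (mod int p)"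
    by (intro cong_mult cong_refl)
qed

lemma Sp_grp_preserves_symp: assumes "1 < p" "X \<in> Sp_grp p g"
  shows "symp g (mvmul (2*g) X u) (mvmul (2*g) X v) mod int p = symp g u v mod int p"
  using assms bilin_mcong[of p "2*g" "mmul (2*g) (mtransp X) (mmul (2*g) (Jint g) X)" "Jint g" u v]
  by (simp add: symp_eq_bilin bilin_mvmul Sp_grp_iff)

lemma Sp_grpI_symp: assumes "1 < p" "is_mat p (2*g) X"
  "\<And>u v. symp g (mvmul (2*g) X u) (mvmul (2*g) X v) mod int p = symp g u v mod int p"
  shows "X \<in> Sp_grp p g"
  unfolding Sp_grp_iff[OF assms(1)]
proof (intro conjI assms(2))
  show "mcong p (2*g) (mmul (2*g) (mtransp X) (mmul (2*g) (Jint g) X)) (Jint g)"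
    unfolding mcong_def
  proof (intro allI impI)
    fix a b assume "a < 2*g" "b < 2*g"
    then show "mmul (2*g) (mtransp X) (mmul (2*g) (Jint g) X) a b mod int p = Jint g a b mod int p"
      using assms(3)[of "unit_vec a" "unit_vec b"]
        by (simp add: symp_eq_bilin bilin_mvmul bilin_unit_vec)
  qed
qed

lemma mvmul_mmul: "mvmul n (mmul n A B) x = mvmul n A (mvmul n B x)"
  unfolding mvmul_def mmul_def
    by (auto simp: sum_distrib_left sum_distrib_right mult.assoc intro!: ext sum.swap[THEN trans])

lemma vcong_mvmul: assumes "mcong p n A A'" "vcong p n x x'"
  shows "vcong p n (mvmul n A x) (mvmul n A' x')"
proof -
  have "mcong p n (mmul n A (outer x (\<lambda>_. 1))) (mmul n A' (outer x' (\<lambda>_. 1)))"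
    by (intro mcong_mmul assms mcong_outer vcong_refl)
  then show ?thesis unfolding mmul_outer_right by (auto simp: mcong_def vcong_def outer_def)
qed

lemma mvmul_one: "vcong p n (mvmul n (mat_one n) x) x"
  unfolding vcong_def mvmul_def mat_one_def
  by (simp add: if_distrib[of "\<lambda>x. x * _"] sum.delta cong: if_cong)

lemma mvmul_unit_vec: "j < n \<Longrightarrow> mvmul n A (unit_vec j) i = A i j"
  unfolding mvmul_def unit_vec_def
  by (simp add: if_distrib[of "\<lambda>x. _ * x"] sum.delta' cong: if_cong)

lemma mcongI_mvmul: assumes "\<And>x. vcong p n (mvmul n A x) (mvmul n B x)" shows "mcong p n A B"
  unfolding mcong_def
proof (intro allI impI)
  fix i j assume "i < n" "j < n"
  then show "A i j mod int p = B i j mod int p" using assms[of "unit_vec j"]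
    by (simp add: vcong_def mvmul_unit_vec)
qed

lemma symp_row_eq_symp: "j < 2*g \<Longrightarrow> symp_row g c j = symp g c (unit_vec j)"
  unfolding symp_eq_row unit_vec_def
  by (simp add: if_distrib[of "\<lambda>x. _ * x"] sum.delta' cong: if_cong)

lemma vmmul_symp_row: "j < 2*g
    \<Longrightarrow> vmmul (2*g) (symp_row g b) Y j = symp g b (mvmul (2*g) Y (unit_vec j))"
  unfolding symp_eq_row vmmul_def by (intro sum.cong) (auto simp: mvmul_unit_vec)

definition transvection :: "nat \<Rightarrow> nat \<Rightarrow> int \<Rightarrow> (nat \<Rightarrow> int) \<Rightarrow> mat" where
  "transvection p g a w = mat_red p (2*g) (mat_one (2*g) + msmult a (outer w (symp_row g w)))"

lemma mvmul_transvection: "vcong p (2*g) (mvmul (2*g) (transvection p g a w) x) (x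
    + vsmult (a * symp g w x) w)"
proof -
  have "vcong p (2*g) (mvmul (2*g) (transvection p g a w) x) (mvmul (2*g) (mat_one (2*g)
      + msmult a (outer w (symp_row g w))) x)"
    unfolding transvection_def by (intro vcong_mvmul mcong_mat_red vcong_refl)
  moreover have "mvmul (2*g) (mat_one (2*g) + msmult a (outer w (symp_row g w))) x
       = mvmul (2*g) (mat_one (2*g)) x + vsmult (a * symp g w x) w"
    unfolding mvmul_def symp_eq_row
      by (auto simp: plus_fun_def msmult_def outer_def vsmult_def sum.distrib sum_distrib_left
          algebra_simps intro!: ext)
  moreover have "vcong p (2*g) (mvmul (2*g) (mat_one (2*g)) x + vsmult (a * symp g w x) w) (x
      + vsmult (a * symp g w x) w)"
    by (intro vcong_add mvmul_one vcong_refl)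
  ultimately show ?thesis by (metis vcong_trans)
qed

lemma symp_transvection_invariant: "symp g (x + vsmult (a * symp g w x) w) (y
    + vsmult (a * symp g w y) w) = symp g x y"
  by (simp add: symp_add_left symp_add_right symp_vsmult_left symp_vsmult_right algebra_simps
      symp_antisym[of g x w] symp_antisym[of g y w])

lemma transvection_in_Sp_grp: assumes "1 < p" shows "transvection p g a w \<in> Sp_grp p g"
proof (rule Sp_grpI_symp[OF assms])
  show "is_mat p (2*g) (transvection p g a w)" using assms
    by (simp add: transvection_def is_mat_mat_red)
  fix u v
  show "symp g (mvmul (2*g) (transvection p g a w) u) (mvmul (2*g) (transvection p g a w) v) mod
      int p = symp g u v mod int p"
  proof -
    have "symp g (mvmul (2*g) (transvection p g a w) u) (mvmul (2*g) (transvection p g a w) v) mod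
        int p
      = symp g (u + vsmult (a * symp g w u) w) (v + vsmult (a * symp g w v) w) mod int p"
      by (rule symp_vcong[OF mvmul_transvection mvmul_transvection])
    then show ?thesis using symp_transvection_invariant by simp
  qed
qed

lemma eq_imp_vcong: "u = v \<Longrightarrow> vcong p n u v" by simp

lemma transvection_inverse: assumes "1 < p"
  shows "mat_mul p (2*g) (transvection p g a w) (transvection p g (-a) w) = mat_one (2*g)"
proof (rule mcong_imp_eq[of p "2*g"])
  show "is_mat p (2*g) (mat_mul p (2*g) (transvection p g a w) (transvection p g (-a) w))"
    using assms by (simp add: mat_mul_eq_red is_mat_mat_red)
  show "is_mat p (2*g) (mat_one (2*g))" using assms by (rule is_mat_one)
  show "mcong p (2*g) (mat_mul p (2*g) (transvection p g a w) (transvection p g (-a) w)) (mat_one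
      (2*g))"
    unfolding mat_mul_eq_red mcong_mat_red_iff
  proof (rule mcongI_mvmul)
    fix x
    let ?y = "x + vsmult (- a * symp g w x) w"
    have "vcong p (2*g) (mvmul (2*g) (mmul (2*g) (transvection p g a w) (transvection p g
        (-a) w)) x) (mvmul (2*g) (transvection p g a w) ?y)"
      unfolding mvmul_mmul by (intro vcong_mvmul mcong_refl mvmul_transvection)
    also have "vcong p (2*g) \<dots> (?y + vsmult (a * symp g w ?y) w)" by (rule mvmul_transvection)
    also have "vcong p (2*g) (?y + vsmult (a * symp g w ?y) w) x"
    proof (rule eq_imp_vcong)
      have "symp g w ?y = symp g w x" by (simp add: symp_add_right symp_vsmult_right)
      then show "?y + vsmult (a * symp g w ?y) w = x"
        by (auto simp: vsmult_def plus_fun_def algebra_simps intro!: ext)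
    qed
    also have "vcong p (2*g) x (mvmul (2*g) (mat_one (2*g)) x)" by (rule vcong_sym[OF mvmul_one])
    finally show "vcong p (2*g) (mvmul (2*g) (mmul (2*g) (transvection p g a w) (transvection p g
        (-a) w)) x) (mvmul (2*g) (mat_one (2*g)) x)" .
  qed
qed

definition mat_conj :: "nat \<Rightarrow> nat \<Rightarrow> mat \<Rightarrow> mat \<Rightarrow> mat \<Rightarrow> mat" where
  "mat_conj p g X Y M = mat_mul p (2*g) X (mat_mul p (2*g) M Y)"

lemma mvmul_right_inverse: assumes "mat_mul p (2*g) X Y = mat_one (2*g)"
  shows "vcong p (2*g) (mvmul (2*g) X (mvmul (2*g) Y x)) x"
proof -
  have "mcong p (2*g) (mmul (2*g) X Y) (mat_one (2*g))"
    using assms mcong_mat_red[of p "2*g" "mmul (2*g) X Y"]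
    by (simp add: mat_mul_eq_red mcong_sym)
  then have "vcong p (2*g) (mvmul (2*g) (mmul (2*g) X Y) x) (mvmul (2*g) (mat_one (2*g)) x)"
    by (intro vcong_mvmul vcong_refl)
  then show ?thesis unfolding mvmul_mmul using mvmul_one vcong_trans by blast
qed

lemma mat_conj_outer: assumes "1 < p" "X \<in> Sp_grp p g" "mat_mul p (2*g) X Y = mat_one (2*g)"
  shows "mcong p (2*g) (mmul (2*g) X (mmul (2*g) (outer a (symp_row g b)) Y)) (outer (mvmul
      (2*g) X a) (symp_row g (mvmul (2*g) X b)))"
  unfolding mmul_outer_left mmul_outer_right
proof (intro mcong_outer vcong_refl)
  show "vcong p (2*g) (vmmul (2*g) (symp_row g b) Y) (symp_row g (mvmul (2*g) X b))"
    unfolding vcong_def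
  proof (intro allI impI)
    fix j assume j: "j < 2*g"
    have "symp g (mvmul (2*g) X b) (unit_vec j) mod int p = symp g (mvmul (2*g) X b) (mvmul (2*g) X
        (mvmul (2*g) Y (unit_vec j))) mod int p"
      by (rule symp_vcong[OF vcong_refl vcong_sym[OF mvmul_right_inverse[OF assms(3)]]])
    also have "\<dots> = symp g b (mvmul (2*g) Y (unit_vec j)) mod int p"
      by (rule Sp_grp_preserves_symp[OF assms(1,2)])
    finally show "vmmul (2*g) (symp_row g b) Y j mod int p
        = symp_row g (mvmul (2*g) X b) j mod int p"
      using j by (simp add: vmmul_symp_row symp_row_eq_symp)
  qed
qed

lemma mcong_mat_conj: "mcong p (2*g) (mat_conj p g X Y M) (mmul (2*g) X (mmul (2*g) M Y))"
  unfolding mat_conj_def mat_mul_eq_red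
    by (intro mcong_trans[OF mcong_mat_red] mcong_mmul_right mcong_refl)

lemma mcong_mat_conj_mat_red: "mcong p (2*g) (mat_conj p g X Y (mat_red p (2*g) A)) (mmul (2*g) X
    (mmul (2*g) A Y))"
  by (rule mcong_trans[OF mcong_mat_conj]) (intro mcong_mmul_right mcong_mmul_left mcong_mat_red)

lemma is_mat_mat_conj: "0 < p \<Longrightarrow> is_mat p (2*g) (mat_conj p g X Y M)"
  by (simp add: mat_conj_def mat_mul_eq_red is_mat_mat_red)

lemma mat_conj_sym_sq: assumes "1 < p" "X \<in> Sp_grp p g" "mat_mul p (2*g) X Y = mat_one (2*g)"
  shows "mat_conj p g X Y (sym_sq p g u) = sym_sq p g (mvmul (2*g) X u)"
proof (rule mcong_imp_eq[of p "2*g"])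
  show "is_mat p (2*g) (mat_conj p g X Y (sym_sq p g u))" using assms by (simp add: is_mat_mat_conj)
  show "is_mat p (2*g) (sym_sq p g (mvmul (2*g) X u))" using assms
    by (simp add: sym_sq_def is_mat_mat_red)
  show "mcong p (2*g) (mat_conj p g X Y (sym_sq p g u)) (sym_sq p g (mvmul (2*g) X u))"
    unfolding sym_sq_def by (rule mcong_trans[OF mcong_mat_conj_mat_red], rule mcong_trans[OF
        mat_conj_outer[OF assms]], rule mcong_sym, rule mcong_mat_red)
qed

lemma mat_conj_mat_add: assumes "0 < p"
  shows "mat_conj p g X Y (mat_add p (2*g) A B)
      = mat_add p (2*g) (mat_conj p g X Y A) (mat_conj p g X Y B)"
proof (rule mcong_imp_eq[of p "2*g"])
  show "is_mat p (2*g) (mat_conj p g X Y (mat_add p (2*g) A B))" using assms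
    by (simp add: is_mat_mat_conj)
  show "is_mat p (2*g) (mat_add p (2*g) (mat_conj p g X Y A) (mat_conj p g X Y B))" using assms
    by (simp add: mat_add_eq_red is_mat_mat_red)
  have "mcong p (2*g) (mat_conj p g X Y (mat_add p (2*g) A B)) (mmul (2*g) X (mmul (2*g) (A
      + B) Y))"
    unfolding mat_add_eq_red by (rule mcong_mat_conj_mat_red)
  also have "mcong p (2*g) (mmul (2*g) X (mmul (2*g) (A + B) Y)) (mmul (2*g) X (mmul (2*g) A Y)
      + mmul (2*g) X (mmul (2*g) B Y))"
    by (rule eq_imp_mcong) (simp add: mmul_add_left mmul_add_right)
  also have "mcong p (2*g) \<dots> (mat_conj p g X Y A + mat_conj p g X Y B)"
    by (intro mcong_add mcong_sym[OF mcong_mat_conj])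
  also have "mcong p (2*g) \<dots> (mat_add p (2*g) (mat_conj p g X Y A) (mat_conj p g X Y B))"
    by (rule mcong_sym[OF mcong_mat_add])
  finally show "mcong p (2*g) (mat_conj p g X Y (mat_add p (2*g) A B)) (mat_add p (2*g)
      (mat_conj p g X Y A) (mat_conj p g X Y B))" .
qed

lemma mat_conj_in_sp_lie: assumes "1 < p" "X \<in> Sp_grp p g" "mat_mul p (2*g) X Y = mat_one (2*g)"
  "M \<in> sp_lie p g"
  shows "mat_conj p g X Y M \<in> sp_lie p g"
proof (rule sp_lie_induct[where P="\<lambda>M. mat_conj p g X Y M \<in> sp_lie p g", OF assms(1) _ _ assms(4)])
  show "mat_conj p g X Y (sym_sq p g u) \<in> sp_lie p g" for u using assms
    by (simp add: mat_conj_sym_sq sym_sq_in_sp_lie)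
  show "mat_conj p g X Y (mat_add p (2*g) A B) \<in> sp_lie p g" if "mat_conj p g X Y A \<in> sp_lie p g"
      "mat_conj p g X Y B \<in> sp_lie p g" for A B
    using that assms by (simp add: mat_conj_mat_add sp_lie_mat_add)
qed

lemma sp_lie_induct2 [consumes 3, case_names sym_sq add_left add_right]:
  assumes p: "1 < p" and M: "M \<in> sp_lie p g" and N: "N \<in> sp_lie p g"
    and sq: "\<And>u v. P (sym_sq p g u) (sym_sq p g v)"
    and add_left: "\<And>A B N. A \<in> sp_lie p g \<Longrightarrow> B \<in> sp_lie p g \<Longrightarrow> N \<in> sp_lie p g \<Longrightarrow>
        P A N \<Longrightarrow> P B N \<Longrightarrow> P (mat_add p (2*g) A B) N"
    and add_right: "\<And>M A B. M \<in> sp_lie p g \<Longrightarrow> A \<in> sp_lie p g \<Longrightarrow> B \<in> sp_lie p g \<Longrightarrow>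
        P M A \<Longrightarrow> P M B \<Longrightarrow> P M (mat_add p (2*g) A B)"
  shows "P M N"
proof -
  have sq_left: "P (sym_sq p g u) N" if "N \<in> sp_lie p g" for u N
    by (rule sp_lie_induct[where P="P (sym_sq p g u)", OF p sq _ that])
      (auto intro: add_right sym_sq_in_sp_lie[OF p])
  have "\<forall>N\<in>sp_lie p g. P M N"
    by (rule sp_lie_induct[where P="\<lambda>M. \<forall>N\<in>sp_lie p g. P M N", OF p _ _ M])
      (auto intro: sq_left add_left)
  then show ?thesis using N by blast
qed

lemma mat_add_0_0: "mat_add p n 0 0 = 0" by (auto simp: mat_add_def zero_fun_def intro!: ext)

lemma mat_nsmult_char: "0 < p \<Longrightarrow> mat_nsmult p n p M = 0"
  by (auto simp: mat_nsmult_def mat_red_def msmult_def zero_fun_def intro!: ext)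

lemma sym_sq_vcong: assumes "1 < p" "vcong p (2*g) u u'" shows "sym_sq p g u = sym_sq p g u'"
  unfolding sym_sq_def using assms by (intro mat_red_cong mcong_outer vcong_symp_row) auto

lemma sym_sq_add: assumes "1 < p"
  shows "sym_sq p g (u+v) = mat_add p (2*g) (mat_add p (2*g) (sym_sq p g u) (sym_sq p g v))
      (sym_prod p g u v)"
proof (rule mcong_imp_eq[of p "2*g"])
  show "is_mat p (2*g) (sym_sq p g (u+v))" using assms by (simp add: sym_sq_def is_mat_mat_red)
  show "is_mat p (2*g) (mat_add p (2*g) (mat_add p (2*g) (sym_sq p g u) (sym_sq p g v))
      (sym_prod p g u v))"
    using assms by (simp add: mat_add_eq_red is_mat_mat_red)
  have "mcong p (2*g) (mat_add p (2*g) (mat_add p (2*g) (sym_sq p g u) (sym_sq p g v))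
      (sym_prod p g u v))
     ((outer u (symp_row g u) + outer v (symp_row g v)) + (outer u (symp_row g v)
         + outer v (symp_row g u)))"
    by (rule mcong_trans[OF mcong_mat_add]) (intro mcong_add mcong_trans[OF mcong_mat_add]
        mcong_sym_sq mcong_sym_prod)
  also have "mcong p (2*g) ((outer u (symp_row g u) + outer v (symp_row g v))
      + (outer u (symp_row g v) + outer v (symp_row g u))) (outer (u+v) (symp_row g (u+v)))"
    by (rule eq_imp_mcong) (auto simp: outer_def symp_row_def plus_fun_def algebra_simps intro!:
        ext)
  also have "mcong p (2*g) (outer (u+v) (symp_row g (u+v))) (sym_sq p g (u+v))"
    by (rule mcong_sym[OF mcong_sym_sq])
  finally show "mcong p (2*g) (sym_sq p g (u+v)) (mat_add p (2*g) (mat_add p (2*g) (sym_sq p g u)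
      (sym_sq p g v)) (sym_prod p g u v))"
    by (rule mcong_sym)
qed

lemma sym_sq_neg: "sym_sq p g (vsmult (-1) u) = sym_sq p g u"
  unfolding sym_sq_def by (rule arg_cong[where f="mat_red p (2*g)"]) (auto simp: outer_def
      symp_row_def vsmult_def intro!: ext)

lemma sym_prod_add_left: assumes "1 < p"
  shows "sym_prod p g (a+b) c = mat_add p (2*g) (sym_prod p g a c) (sym_prod p g b c)"
proof (rule mcong_imp_eq[of p "2*g"])
  show "is_mat p (2*g) (sym_prod p g (a+b) c)" using assms
    by (simp add: sym_prod_def is_mat_mat_red)
  show "is_mat p (2*g) (mat_add p (2*g) (sym_prod p g a c) (sym_prod p g b c))"
    using assms by (simp add: mat_add_eq_red is_mat_mat_red)
  have "mcong p (2*g) (mat_add p (2*g) (sym_prod p g a c) (sym_prod p g b c))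
     ((outer a (symp_row g c) + outer c (symp_row g a)) + (outer b (symp_row g c)
         + outer c (symp_row g b)))"
    by (rule mcong_trans[OF mcong_mat_add]) (intro mcong_add mcong_sym_prod)
  also have "mcong p (2*g) ((outer a (symp_row g c) + outer c (symp_row g a))
      + (outer b (symp_row g c) + outer c (symp_row g b))) (outer (a+b) (symp_row g c)
          + outer c (symp_row g (a+b)))"
    by (rule eq_imp_mcong) (auto simp: outer_def symp_row_def plus_fun_def algebra_simps intro!:
        ext)
  also have "mcong p (2*g) (outer (a+b) (symp_row g c) + outer c (symp_row g (a+b))) (sym_prod p g
      (a+b) c)" by (rule mcong_sym[OF mcong_sym_prod])
  finally show "mcong p (2*g) (sym_prod p g (a+b) c) (mat_add p (2*g) (sym_prod p g a c)
      (sym_prod p g b c))"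
    by (rule mcong_sym)
qed

lemma sym_prod_self: assumes "1 < p"
  shows "sym_prod p g u u = mat_add p (2*g) (sym_sq p g u) (sym_sq p g u)"
proof (rule mcong_imp_eq[of p "2*g"])
  show "is_mat p (2*g) (sym_prod p g u u)" using assms by (simp add: sym_prod_def is_mat_mat_red)
  show "is_mat p (2*g) (mat_add p (2*g) (sym_sq p g u) (sym_sq p g u))"
    using assms by (simp add: mat_add_eq_red is_mat_mat_red)
  have "mcong p (2*g) (mat_add p (2*g) (sym_sq p g u) (sym_sq p g u)) (outer u (symp_row g u)
      + outer u (symp_row g u))"
    by (rule mcong_trans[OF mcong_mat_add]) (intro mcong_add mcong_sym_sq)
  also have "mcong p (2*g) (outer u (symp_row g u) + outer u (symp_row g u)) (sym_prod p g u u)"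
    by (rule mcong_sym[OF mcong_sym_prod])
  finally show "mcong p (2*g) (sym_prod p g u u) (mat_add p (2*g) (sym_sq p g u) (sym_sq p g u))"
    by (rule mcong_sym)
qed

lemma frag_cmul_two: "frag_cmul 2 x = x + x"
  using frag_cmul_distrib[of 1 1 x] by simp

lemma frag_cmul_diff: "frag_cmul k (x - y) = frag_cmul k x - frag_cmul k y"
  by (rule poly_mapping_eqI) (simp add: lookup_minus algebra_simps)

abbreviation free_pairs :: "nat \<Rightarrow> nat \<Rightarrow> (mat \<times> mat \<Rightarrow>\<^sub>0 int) monoid" where
  "free_pairs p g \<equiv> free_Abelian_group (sp_lie p g \<times> sp_lie p g)"

definition rels_subgroup :: "nat \<Rightarrow> nat \<Rightarrow> (mat \<times> mat \<Rightarrow>\<^sub>0 int) set" where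
  "rels_subgroup p g = generate (free_pairs p g) (coinv_rels p g)"

lemma H2_coinv_eq: "H2_coinv p g = free_pairs p g Mod rels_subgroup p g"
  by (simp add: H2_coinv_def rels_subgroup_def)

lemma keys_frag_diff2: "Poly_Mapping.keys (frag_of a - frag_of b) \<subseteq> {a,b}"
  using keys_diff[of "frag_of a" "frag_of b"] by auto

lemma keys_frag_diff3: "Poly_Mapping.keys (frag_of a - frag_of b - frag_of c) \<subseteq> {a,b,c}"
  using keys_diff[of "frag_of a - frag_of b" "frag_of c"] keys_frag_diff2[of a b] by auto

locale sp_coinv =
  fixes p g :: nat
  assumes one_less_p: "1 < p"
begin

definition coinv_eq :: "(mat \<times> mat \<Rightarrow>\<^sub>0 int) \<Rightarrow> (mat \<times> mat \<Rightarrow>\<^sub>0 int) \<Rightarrow> bool" (infix "\<sim>" 50)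
  where "x \<sim> y \<longleftrightarrow> x - y \<in> rels_subgroup p g"

definition wedge_sq :: "(nat \<Rightarrow> int) \<Rightarrow> (nat \<Rightarrow> int) \<Rightarrow> (mat \<times> mat \<Rightarrow>\<^sub>0 int)" where
  "wedge_sq x y = frag_of (sym_sq p g x, sym_sq p g y)"

definition wedge_mixed :: "(nat \<Rightarrow> int) \<Rightarrow> (nat \<Rightarrow> int) \<Rightarrow> (nat \<Rightarrow> int) \<Rightarrow> (mat \<times> mat \<Rightarrow>\<^sub>0 int)" where
  "wedge_mixed x a b = frag_of (sym_sq p g x, sym_prod p g a b)"

lemma coinv_rels_carrier: "coinv_rels p g \<subseteq> carrier (free_pairs p g)"
proof
  fix x assume x: "x \<in> coinv_rels p g"
  note sp_add = sp_lie_mat_add[OF one_less_p]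
  show "x \<in> carrier (free_pairs p g)"
    using x unfolding coinv_rels_def carrier_free_Abelian_group_iff
  proof (elim UnE CollectE exE conjE)
    fix M M' N assume e: "x = frag_of (mat_add p (2*g) M M', N) - frag_of (M, N) - frag_of (M', N)"
      and a: "M \<in> sp_lie p g" "M' \<in> sp_lie p g" "N \<in> sp_lie p g"
    show "Poly_Mapping.keys x \<subseteq> sp_lie p g \<times> sp_lie p g"
      unfolding e by (rule order_trans[OF keys_frag_diff3]) (use a sp_add in auto)
  next
    fix M N N' assume e: "x = frag_of (M, mat_add p (2*g) N N') - frag_of (M, N) - frag_of (M, N')"
      and a: "M \<in> sp_lie p g" "N \<in> sp_lie p g" "N' \<in> sp_lie p g"
    show "Poly_Mapping.keys x \<subseteq> sp_lie p g \<times> sp_lie p g"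
      unfolding e by (rule order_trans[OF keys_frag_diff3]) (use a sp_add in auto)
  next
    fix M assume "x = frag_of (M, M)" "M \<in> sp_lie p g"
    then show "Poly_Mapping.keys x \<subseteq> sp_lie p g \<times> sp_lie p g" by simp
  next
    fix X Y M N
    assume e: "x = frag_of (mat_mul p (2*g) X (mat_mul p (2*g) M Y),
                            mat_mul p (2*g) X (mat_mul p (2*g) N Y)) - frag_of (M, N)"
      and XY: "X \<in> Sp_grp p g" "mat_mul p (2*g) X Y = mat_one (2*g)"
      and MN: "M \<in> sp_lie p g" "N \<in> sp_lie p g"
    have "mat_conj p g X Y M \<in> sp_lie p g" "mat_conj p g X Y N \<in> sp_lie p g"
      using MN mat_conj_in_sp_lie[OF one_less_p XY] by auto
    then show "Poly_Mapping.keys x \<subseteq> sp_lie p g \<times> sp_lie p g"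
      unfolding e by (rule_tac order_trans[OF keys_frag_diff2]) (use MN in \<open>auto simp:
          mat_conj_def\<close>)
  qed
qed

lemma subgroup_rels_subgroup: "subgroup (rels_subgroup p g) (free_pairs p g)"
  unfolding rels_subgroup_def
  by (rule group.generate_is_subgroup[OF group_free_Abelian_group coinv_rels_carrier])

lemma rels_subgroup_keys: "x \<in> rels_subgroup p g \<Longrightarrow> Poly_Mapping.keys x \<subseteq> sp_lie p g \<times> sp_lie p g"
  using subgroup.subset[OF subgroup_rels_subgroup] by fastforce

lemma rels_subgroup_add: "x \<in> rels_subgroup p g \<Longrightarrow> y \<in> rels_subgroup p g \<Longrightarrow> x + y \<in> rels_subgroup p g"
  using subgroup.m_closed[OF subgroup_rels_subgroup] by fastforce

lemma rels_subgroup_neg: "x \<in> rels_subgroup p g \<Longrightarrow> - x \<in> rels_subgroup p g"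
  using subgroup.m_inv_closed[OF subgroup_rels_subgroup] rels_subgroup_keys by fastforce

lemma rels_subgroup_zero: "0 \<in> rels_subgroup p g"
  using subgroup.one_closed[OF subgroup_rels_subgroup] by fastforce

lemma rels_subgroup_cmul: "x \<in> rels_subgroup p g \<Longrightarrow> frag_cmul k x \<in> rels_subgroup p g"
  using group.subgroup_int_pow_closed[OF group_free_Abelian_group subgroup_rels_subgroup, of x k]
    rels_subgroup_keys[of x] by simp

lemma coinv_eq_0_iff: "x \<sim> 0 \<longleftrightarrow> x \<in> rels_subgroup p g"
  by (simp add: coinv_eq_def)

lemma coinv_eq_refl [simp]: "x \<sim> x"
  by (simp add: coinv_eq_def rels_subgroup_zero)

lemma coinv_eq_sym: "x \<sim> y \<Longrightarrow> y \<sim> x"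
  unfolding coinv_eq_def using rels_subgroup_neg[of "x - y"] by simp

lemma coinv_eq_trans [trans]: "x \<sim> y \<Longrightarrow> y \<sim> z \<Longrightarrow> x \<sim> z"
  unfolding coinv_eq_def using rels_subgroup_add[of "x - y" "y - z"] by simp

lemma coinv_eq_add: "x \<sim> x' \<Longrightarrow> y \<sim> y' \<Longrightarrow> x + y \<sim> x' + y'"
  unfolding coinv_eq_def using rels_subgroup_add[of "x - x'" "y - y'"] by (simp add: algebra_simps)

lemma coinv_eq_neg: "x \<sim> y \<Longrightarrow> - x \<sim> - y"
  unfolding coinv_eq_def using rels_subgroup_neg[of "x - y"] by (simp add: algebra_simps)

lemma coinv_eq_diff: "x \<sim> x' \<Longrightarrow> y \<sim> y' \<Longrightarrow> x - y \<sim> x' - y'"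
  using coinv_eq_add[OF _ coinv_eq_neg] by (simp only: diff_conv_add_uminus)

lemma coinv_eq_cmul: "x \<sim> y \<Longrightarrow> frag_cmul k x \<sim> frag_cmul k y"
  unfolding coinv_eq_def using rels_subgroup_cmul[of "x - y" k] by (simp add: frag_cmul_diff)

lemma coinv_rel: "r \<in> coinv_rels p g \<Longrightarrow> r \<sim> 0"
  unfolding coinv_eq_def rels_subgroup_def by (simp add: generate.incl)

lemma coinv_eq_sum_diff: "x - y - z \<sim> 0 \<Longrightarrow> x \<sim> y + z"
  by (simp add: coinv_eq_def diff_diff_eq)

lemma rel_add_left:
  assumes "M \<in> sp_lie p g" "M' \<in> sp_lie p g" "N \<in> sp_lie p g"
  shows "frag_of (mat_add p (2*g) M M', N) \<sim> frag_of (M, N) + frag_of (M', N)"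
proof (rule coinv_eq_sum_diff, rule coinv_rel)
  show "frag_of (mat_add p (2*g) M M', N) - frag_of (M, N) - frag_of (M', N) \<in> coinv_rels p g"
    unfolding coinv_rels_def by (rule UnI1, rule UnI1, rule UnI1) (use assms in blast)
qed

lemma rel_add_right:
  assumes "M \<in> sp_lie p g" "N \<in> sp_lie p g" "N' \<in> sp_lie p g"
  shows "frag_of (M, mat_add p (2*g) N N') \<sim> frag_of (M, N) + frag_of (M, N')"
proof (rule coinv_eq_sum_diff, rule coinv_rel)
  show "frag_of (M, mat_add p (2*g) N N') - frag_of (M, N) - frag_of (M, N') \<in> coinv_rels p g"
    unfolding coinv_rels_def by (rule UnI1, rule UnI1, rule UnI2) (use assms in blast)
qed

lemma rel_alt: "M \<in> sp_lie p g \<Longrightarrow> frag_of (M, M) \<sim> 0"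
  by (rule coinv_rel, unfold coinv_rels_def, rule UnI1, rule UnI2) blast

lemma rel_mat_conj:
  assumes "X \<in> Sp_grp p g" "is_mat p (2*g) Y" "mat_mul p (2*g) X Y = mat_one (2*g)"
    and "M \<in> sp_lie p g" "N \<in> sp_lie p g"
  shows "frag_of (mat_conj p g X Y M, mat_conj p g X Y N) \<sim> frag_of (M, N)"
proof -
  have "frag_of (mat_conj p g X Y M, mat_conj p g X Y N) - frag_of (M, N) \<in> coinv_rels p g"
    unfolding coinv_rels_def mat_conj_def by (rule UnI2) (use assms in blast)
  then show ?thesis using coinv_rel by (simp add: coinv_eq_def)
qed

lemma rel_zero_left: assumes "N \<in> sp_lie p g" shows "frag_of (0, N) \<sim> 0"
proof -
  have "frag_of (0, N) \<sim> frag_of (0, N) + frag_of (0, N)"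
    using rel_add_left[OF zero_in_sp_lie zero_in_sp_lie assms] one_less_p by (simp add: mat_add_0_0)
  from coinv_eq_diff[OF this coinv_eq_refl, of "frag_of (0, N)"] have "0 \<sim> frag_of (0, N)" by simp
  then show ?thesis by (rule coinv_eq_sym)
qed

lemma rel_zero_right: assumes "M \<in> sp_lie p g" shows "frag_of (M, 0) \<sim> 0"
proof -
  have "frag_of (M, 0) \<sim> frag_of (M, 0) + frag_of (M, 0)"
    using rel_add_right[OF assms zero_in_sp_lie zero_in_sp_lie] one_less_p
      by (simp add: mat_add_0_0)
  from coinv_eq_diff[OF this coinv_eq_refl, of "frag_of (M, 0)"] have "0 \<sim> frag_of (M, 0)" by simp
  then show ?thesis by (rule coinv_eq_sym)
qed

lemma rel_antisym:
  assumes M: "M \<in> sp_lie p g" and N: "N \<in> sp_lie p g"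
  shows "frag_of (M, N) + frag_of (N, M) \<sim> 0"
proof -
  let ?S = "mat_add p (2*g) M N"
  have S: "?S \<in> sp_lie p g" using sp_lie_mat_add[OF one_less_p M N] .
  have "0 \<sim> frag_of (?S, ?S)" by (rule coinv_eq_sym[OF rel_alt[OF S]])
  also have "\<dots> \<sim> frag_of (M, ?S) + frag_of (N, ?S)" by (rule rel_add_left[OF M N S])
  also have "\<dots> \<sim> (frag_of (M, M) + frag_of (M, N)) + (frag_of (N, M) + frag_of (N, N))"
    by (intro coinv_eq_add rel_add_right M N)
  also have "\<dots> \<sim> (0 + frag_of (M, N)) + (frag_of (N, M) + 0)"
    by (intro coinv_eq_add rel_alt M N coinv_eq_refl)
  finally have "0 \<sim> frag_of (M, N) + frag_of (N, M)" by simp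
  then show ?thesis by (rule coinv_eq_sym)
qed

lemma rel_nsmult_left:
  assumes M: "M \<in> sp_lie p g" and N: "N \<in> sp_lie p g"
  shows "frag_of (mat_nsmult p (2*g) k M, N) \<sim> frag_cmul (int k) (frag_of (M, N))"
proof (induction k)
  case 0
  show ?case using rel_zero_left[OF N] by (simp only: mat_nsmult_0 of_nat_0 frag_cmul_zero)
next
  case (Suc k)
  have kM: "mat_nsmult p (2*g) k M \<in> sp_lie p g"
    using mat_nsmult_in_sp_lie[where P="\<lambda>_. True", OF one_less_p] M by auto
  have "frag_of (mat_nsmult p (2*g) (Suc k) M, N)
      \<sim> frag_of (mat_nsmult p (2*g) k M, N) + frag_of (M, N)"
    using rel_add_left[OF kM M N] one_less_p by (simp add: mat_nsmult_Suc)
  also have "\<dots> \<sim> frag_cmul (int k) (frag_of (M, N)) + frag_of (M, N)"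
    by (intro coinv_eq_add Suc.IH coinv_eq_refl)
  finally show ?case by (simp add: frag_cmul_distrib algebra_simps)
qed

lemma rel_char:
  assumes "M \<in> sp_lie p g" "N \<in> sp_lie p g"
  shows "frag_cmul (int p) (frag_of (M, N)) \<sim> 0"
proof -
  have "frag_cmul (int p) (frag_of (M, N)) \<sim> frag_of (mat_nsmult p (2*g) p M, N)"
    by (rule coinv_eq_sym[OF rel_nsmult_left[OF assms]])
  also have "\<dots> = frag_of (0, N)" using one_less_p by (simp add: mat_nsmult_char)
  also have "\<dots> \<sim> 0" by (rule rel_zero_left[OF assms(2)])
  finally show ?thesis .
qed

lemma coinv_eq_all_frag:
  assumes "\<And>M N. M \<in> sp_lie p g \<Longrightarrow> N \<in> sp_lie p g \<Longrightarrow> frag_of (M, N) \<sim> f (frag_of (M, N))"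
    and "f 0 = 0" and "\<And>x y. f (x - y) = f x - f y"
    and "Poly_Mapping.keys c \<subseteq> sp_lie p g \<times> sp_lie p g"
  shows "c \<sim> f c"
proof (rule free_Abelian_group_induct[OF assms(4)])
  show "0 \<sim> f 0" using assms(2) by simp
  show "x - y \<sim> f (x - y)" if "x \<sim> f x" "y \<sim> f y" for x y
    using coinv_eq_diff[OF that] by (simp add: assms(3))
  show "frag_of a \<sim> f (frag_of a)" if "a \<in> sp_lie p g \<times> sp_lie p g" for a
    using that assms(1) by (cases a) auto
qed

lemma wedge_sq_vcong:
  "vcong p (2*g) x x' \<Longrightarrow> vcong p (2*g) y y' \<Longrightarrow> wedge_sq x y = wedge_sq x' y'"
  by (simp add: wedge_sq_def sym_sq_vcong[OF one_less_p])

lemma wedge_sq_transvect: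
  assumes "vcong p (2*g) (u + vsmult (a * symp g w u) w) u'"
    and "vcong p (2*g) (v + vsmult (a * symp g w v) w) v'"
  shows "wedge_sq u v \<sim> wedge_sq u' v'"
proof -
  let ?X = "transvection p g a w" and ?Y = "transvection p g (-a) w"
  note X = transvection_in_Sp_grp[OF one_less_p] transvection_inverse[OF one_less_p]
  have conj_eq: "mat_conj p g ?X ?Y (sym_sq p g x) = sym_sq p g x'"
    if "vcong p (2*g) (x + vsmult (a * symp g w x) w) x'" for x x'
    using one_less_p that
    by (simp add: mat_conj_sym_sq X) (intro sym_sq_vcong vcong_trans[OF mvmul_transvection]; simp)
  have "frag_of (mat_conj p g ?X ?Y (sym_sq p g u), mat_conj p g ?X ?Y (sym_sq p g v))
      \<sim> wedge_sq u v"
    unfolding wedge_sq_def using one_less_p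
    by (intro rel_mat_conj X sym_sq_in_sp_lie) (auto simp: transvection_def is_mat_mat_red)
  then show ?thesis
    unfolding conj_eq[OF assms(1)] conj_eq[OF assms(2)] wedge_sq_def by (rule coinv_eq_sym)
qed

lemma wedge_sq_add_right: "wedge_sq x (u + v) \<sim> wedge_sq x u + wedge_sq x v + wedge_mixed x u v"
proof -
  note sp = sym_sq_in_sp_lie[OF one_less_p] sym_prod_in_sp_lie[OF one_less_p]
  have "wedge_sq x (u + v) \<sim> frag_of (sym_sq p g x,
      mat_add p (2*g) (mat_add p (2*g) (sym_sq p g u) (sym_sq p g v)) (sym_prod p g u v))"
    by (simp only: wedge_sq_def sym_sq_add[OF one_less_p] coinv_eq_refl)
  also have "\<dots> \<sim> frag_of (sym_sq p g x, mat_add p (2*g) (sym_sq p g u) (sym_sq p g v))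
                  + wedge_mixed x u v"
    unfolding wedge_mixed_def by (intro rel_add_right sp sp_lie_mat_add[OF one_less_p])
  also have "\<dots> \<sim> (wedge_sq x u + wedge_sq x v) + wedge_mixed x u v"
    unfolding wedge_sq_def by (intro coinv_eq_add rel_add_right sp coinv_eq_refl)
  finally show ?thesis .
qed

lemma wedge_mixed_polar: "wedge_mixed x u v \<sim> wedge_sq x (u + v) - wedge_sq x u - wedge_sq x v"
  using coinv_eq_sym[OF wedge_sq_add_right[of x u v]]
  by (simp add: coinv_eq_def algebra_simps)

lemma wedge_mixed_if_invariant:
  assumes "wedge_sq x s \<sim> wedge_sq x (s + w)"
  shows "wedge_mixed x s w \<sim> - wedge_sq x w"
proof -
  have "wedge_mixed x s w \<sim> wedge_sq x (s + w) - wedge_sq x s - wedge_sq x w"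
    by (rule wedge_mixed_polar)
  also have "\<dots> \<sim> wedge_sq x s - wedge_sq x s - wedge_sq x w"
    by (intro coinv_eq_diff coinv_eq_sym[OF assms] coinv_eq_refl)
  finally show ?thesis by simp
qed

lemma wedge_mixed_commute: "wedge_mixed x a b = wedge_mixed x b a"
  by (simp add: wedge_mixed_def sym_prod_commute)

lemma wedge_mixed_add_left: "wedge_mixed x (a + b) c \<sim> wedge_mixed x a c + wedge_mixed x b c"
  unfolding wedge_mixed_def sym_prod_add_left[OF one_less_p]
  by (intro rel_add_right sym_sq_in_sp_lie sym_prod_in_sp_lie one_less_p)

lemma wedge_mixed_self: "wedge_mixed x u u \<sim> wedge_sq x u + wedge_sq x u"
  unfolding wedge_mixed_def wedge_sq_def sym_prod_self[OF one_less_p]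
  by (intro rel_add_right sym_sq_in_sp_lie one_less_p)

lemma wedge_sq_antisym: "wedge_sq x y + wedge_sq y x \<sim> 0"
  unfolding wedge_sq_def by (intro rel_antisym sym_sq_in_sp_lie one_less_p)

lemma wedge_sq_self: "wedge_sq x x \<sim> 0"
  unfolding wedge_sq_def by (intro rel_alt sym_sq_in_sp_lie one_less_p)

lemma wedge_sq_char: "frag_cmul (int p) (wedge_sq x y) \<sim> 0"
  unfolding wedge_sq_def by (intro rel_char sym_sq_in_sp_lie one_less_p)

lemma wedge_sq_zero_left: "wedge_sq 0 y \<sim> 0"
  unfolding wedge_sq_def sym_sq_zero by (intro rel_zero_left sym_sq_in_sp_lie one_less_p)

lemma wedge_sq_zero_right: "wedge_sq x 0 \<sim> 0"
  unfolding wedge_sq_def sym_sq_zero by (intro rel_zero_right sym_sq_in_sp_lie one_less_p)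

end

lemma vcong_add_vsmult: "c mod int p = d mod int p \<Longrightarrow> vcong p n (x + vsmult c w) (x + vsmult d w)"
  by (intro vcong_add vcong_refl vcong_vsmult_scalar)

lemma add_vsmult_0 [simp]: "x + vsmult 0 w = x"
  by (simp add: vsmult_def plus_fun_def)

lemma vsmult_1 [simp]: "vsmult 1 w = w"
  by (simp add: vsmult_def)

definition dual_index :: "nat \<Rightarrow> nat \<Rightarrow> nat" where
  "dual_index g m = (if m < g then m + g else m - g)"

lemma symp_unit_vec_dual:
  assumes "m < 2*g"
  shows "symp g (unit_vec (dual_index g m)) y = (if m < g then - y m else y m)"
proof (cases "m < g")
  case True
  have "symp g (unit_vec (dual_index g m)) y = (\<Sum>i<g. - (if i = m then y i else 0))"
    unfolding symp_def using True by (intro sum.cong) (auto simp: dual_index_def unit_vec_def)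
  also have "\<dots> = - y m" using True by (simp add: sum_negf sum.delta')
  finally show ?thesis using True by simp
next
  case False
  have "symp g (unit_vec (dual_index g m)) y = (\<Sum>i<g. (if i = m - g then y (i+g) else 0))"
    unfolding symp_def using False assms
      by (intro sum.cong) (auto simp: dual_index_def unit_vec_def)
  also have "\<dots> = y m" using False assms by (simp add: sum.delta')
  finally show ?thesis using False by simp
qed

lemma symp_unit_vec_0_g: "0 < g \<Longrightarrow> symp g (unit_vec 0) (unit_vec g) = 1"
  unfolding symp_def by (simp add: unit_vec_def if_distrib[of "\<lambda>x. x * _"] sum.delta cong: if_cong)

lemma even_symp_commute: "even (symp g x y) \<longleftrightarrow> even (symp g y x)"
  by (simp add: symp_antisym[of g x y])

lemma not_vcong2_iff: "\<not> vcong 2 n x y \<longleftrightarrow> (\<exists>m<n. odd (x m) \<noteq> odd (y m))"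
proof -
  have "(x m mod 2 = y m mod 2) \<longleftrightarrow> (odd (x m) \<longleftrightarrow> odd (y m))" for m
    by (auto simp: even_iff_mod_2_eq_zero odd_iff_mod_2_eq_one)
  then show ?thesis by (auto simp: vcong_def)
qed

lemma odd_symp_imp_not_vcong_0: "odd (symp g x y) \<Longrightarrow> \<not> vcong 2 (2*g) x 0"
  using symp_vcong[of 2 g x 0 y y] by (auto simp: symp_def even_iff_mod_2_eq_zero)

lemma exists_symp_odd_even:
  assumes "\<not> vcong 2 (2*g) y 0" "\<not> vcong 2 (2*g) x y"
  shows "\<exists>a. odd (symp g a y) \<and> even (symp g a x)"
proof -
  obtain m0 where m0: "m0 < 2*g" "odd (y m0)" using assms(1) by (auto simp: not_vcong2_iff)
  obtain m1 where m1: "m1 < 2*g" "odd (x m1) \<noteq> odd (y m1)" using assms(2)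
    by (auto simp: not_vcong2_iff)
  let ?e = "\<lambda>m. unit_vec (dual_index g m)"
  have e: "even (symp g (?e m) z) \<longleftrightarrow> even (z m)" if "m < 2*g" for m z
    using symp_unit_vec_dual[OF that] by simp
  consider "even (x m0)" | "odd (x m0)" "odd (y m1)" | "odd (x m0)" "even (y m1)" by blast
  then show ?thesis
  proof cases
    case 1 then show ?thesis using m0 e by blast
  next
    case 2 then show ?thesis using m1 e by blast
  next
    case 3 then show ?thesis using m0 m1 e[of m0] e[of m1]
      by (intro exI[of _ "?e m0 + ?e m1"]) (simp add: symp_add_left)
  qed
qed

locale sp_coinv_odd = sp_coinv +
  assumes prime_p: "prime p" and odd_p: "odd p"
begin

lemma coinv_eq_0_if_two_torsion:
  assumes "frag_cmul 2 x \<sim> 0" and "frag_cmul (int p) x \<sim> 0"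
  shows "x \<sim> 0"
proof -
  obtain k where k: "int p = 2 * k + 1" using odd_p by (auto elim!: oddE)
  have "frag_cmul (int p) x - frag_cmul k (frag_cmul 2 x) \<sim> 0 - frag_cmul k 0"
    by (intro coinv_eq_diff coinv_eq_cmul assms)
  moreover have "frag_cmul (int p) x - frag_cmul k (frag_cmul 2 x) = x"
    unfolding k frag_cmul_cmul frag_cmul_distrib by (simp add: mult.commute)
  ultimately show ?thesis by simp
qed

text \<open>Three transvections carry the pair \<open>(u, v)\<close> to \<open>(v, -u)\<close> when \<open>a\<close> inverts
  \<open>-\<omega>(u, v)\<close>; the square classes of \<open>-u\<close> and \<open>u\<close> agree.\<close>

lemma wedge_sq_commute_if_inverse:
  assumes a: "(a * symp g u v) mod int p = (-1) mod int p"
  shows "wedge_sq u v \<sim> wedge_sq v u"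
proof -
  have a': "(a * symp g v u) mod int p = 1 mod int p"
    using a by (metis add.inverse_inverse mod_minus_eq mult_minus_right symp_antisym)
  have "wedge_sq u v \<sim> wedge_sq u (v + vsmult (-1) u)"
  proof (rule wedge_sq_transvect[where a=a and w=u])
    show "vcong p (2*g) (u + vsmult (a * symp g u u) u) u"
      by (rule eq_imp_vcong) (auto simp: vsmult_def plus_fun_def)
    show "vcong p (2*g) (v + vsmult (a * symp g u v) u) (v + vsmult (-1) u)"
      by (rule vcong_add_vsmult[OF a])
  qed
  also have "\<dots> \<sim> wedge_sq (u + v) (vsmult (-1) u)"
  proof (rule wedge_sq_transvect[where a=a and w=v])
    have "vcong p (2*g) (u + vsmult (a * symp g v u) v) (u + vsmult 1 v)"
      by (rule vcong_add_vsmult[OF a'])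
    then show "vcong p (2*g) (u + vsmult (a * symp g v u) v) (u + v)" by (simp add: vsmult_def)
    have "symp g v (v + vsmult (- 1) u) = symp g u v"
      by (simp add: symp_add_right symp_vsmult_right symp_antisym[of g v u])
    then have "vcong p (2*g) (v + vsmult (-1) u + vsmult (a * symp g v (v + vsmult (- 1) u)) v)
        (v + vsmult (-1) u + vsmult (-1) v)"
      by (simp only: vcong_add_vsmult[OF a])
    then show "vcong p (2*g) (v + vsmult (-1) u + vsmult (a * symp g v (v + vsmult (- 1) u)) v)
        (vsmult (-1) u)"
      by (simp add: vsmult_def plus_fun_def)
  qed
  also have "\<dots> \<sim> wedge_sq v (vsmult (-1) u)"
  proof (rule wedge_sq_transvect[where a=a and w=u])
    have "vcong p (2*g) (u + v + vsmult (a * symp g u (u + v)) u) (u + v + vsmult (-1) u)"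
      using vcong_add_vsmult[OF a] by (simp add: symp_add_right)
    then show "vcong p (2*g) (u + v + vsmult (a * symp g u (u + v)) u) v"
      by (simp add: vsmult_def plus_fun_def)
    show "vcong p (2*g) (vsmult (-1) u + vsmult (a * symp g u (vsmult (-1) u)) u) (vsmult (-1) u)"
      unfolding symp_vsmult_right symp_self
        by (rule eq_imp_vcong) (auto simp: vsmult_def plus_fun_def)
  qed
  also have "\<dots> = wedge_sq v u" by (simp add: wedge_sq_def sym_sq_neg)
  finally show ?thesis .
qed

lemma wedge_sq_vanish_unit:
  assumes "\<not> int p dvd symp g u v"
  shows "wedge_sq u v \<sim> 0"
proof (rule coinv_eq_0_if_two_torsion)
  have "coprime (int p) (symp g u v)"
    using assms prime_p by (intro prime_imp_coprime) simp_all
  then obtain b where "[symp g u v * b = 1] (mod int p)"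
    using cong_solve_coprime_int coprime_commute by blast
  then have "(- (symp g u v * b)) mod int p = (-1) mod int p"
    unfolding cong_def by (rule mod_minus_cong)
  then have "((- b) * symp g u v) mod int p = (-1) mod int p" by (simp add: mult.commute)
  then have "wedge_sq u v \<sim> wedge_sq v u" by (rule wedge_sq_commute_if_inverse)
  then have "frag_cmul 2 (wedge_sq u v) \<sim> wedge_sq u v + wedge_sq v u"
    unfolding frag_cmul_two by (rule coinv_eq_add[OF coinv_eq_refl])
  also have "\<dots> \<sim> 0" by (rule wedge_sq_antisym)
  finally show "frag_cmul 2 (wedge_sq u v) \<sim> 0" .
  show "frag_cmul (int p) (wedge_sq u v) \<sim> 0" by (rule wedge_sq_char)
qed

text \<open>If \<open>\<omega>(u, v) \<equiv> 0\<close> but \<open>u \<noteq> 0\<close>, pick a basis vector \<open>w\<close> with \<open>\<omega>(u, w)\<close> a unit;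
  then \<open>v + w\<close>, \<open>w\<close> and \<open>v + 2w\<close> all pair with \<open>u\<close> to a unit (as \<open>p \<noteq> 2\<close>), and
  expanding these three square classes isolates the one of \<open>(u, v)\<close>.\<close>

lemma wedge_sq_vanish_degenerate:
  assumes uv: "int p dvd symp g u v" and m: "m < 2*g" "\<not> int p dvd u m"
  shows "wedge_sq u v \<sim> 0"
proof -
  define w where "w = unit_vec (dual_index g m)"
  have "symp g u w = (if m < g then u m else - u m)"
    unfolding w_def using symp_unit_vec_dual[OF m(1), of u] symp_antisym[of g u] by auto
  then have nw: "\<not> int p dvd symp g u w" using m(2) by (auto split: if_splits)
  have n2: "\<not> int p dvd 2" using odd_p prime_p
    by (metis dvd_trans even_numeral int_dvd_int_iff of_nat_numeral prime_nat_iff two_is_prime_nat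
        not_prime_1)
  have "\<not> int p dvd 2 * symp g u w" using n2 nw prime_p by (simp add: prime_dvd_mult_iff)
  moreover have "symp g u (v + w + w) = symp g u v + 2 * symp g u w"
    by (simp only: symp_add_right)
  ultimately have K: "wedge_sq u (v + w) \<sim> 0" "wedge_sq u w \<sim> 0" "wedge_sq u (v + w + w) \<sim> 0"
    using uv nw by (auto intro!: wedge_sq_vanish_unit simp only: symp_add_right dvd_add_right_iff)
  have "wedge_mixed u (v + w) w \<sim> wedge_sq u (v + w + w) - wedge_sq u (v + w) - wedge_sq u w"
    by (rule wedge_mixed_polar)
  also have "\<dots> \<sim> 0 - 0 - 0" by (intro coinv_eq_diff K)
  finally have B1: "wedge_mixed u (v + w) w \<sim> 0" by simp
  have "wedge_mixed u v w \<sim> wedge_mixed u v w + (wedge_sq u w + wedge_sq u w)"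
    using coinv_eq_sym[OF coinv_eq_add[OF coinv_eq_refl coinv_eq_add[OF K(2) K(2)]],
        of "wedge_mixed u v w"] by simp
  also have "\<dots> \<sim> wedge_mixed u v w + wedge_mixed u w w"
    by (intro coinv_eq_add coinv_eq_refl coinv_eq_sym[OF wedge_mixed_self])
  also have "\<dots> \<sim> wedge_mixed u (v + w) w"
    by (rule coinv_eq_sym[OF wedge_mixed_add_left])
  finally have B: "wedge_mixed u v w \<sim> 0" using B1 by (rule coinv_eq_trans)
  have "wedge_sq u v \<sim> wedge_sq u (v + w) - wedge_sq u w - wedge_mixed u v w"
    using coinv_eq_sym[OF wedge_sq_add_right[of u v w]] by (simp add: coinv_eq_def algebra_simps)
  also have "\<dots> \<sim> 0 - 0 - 0" by (intro coinv_eq_diff K B)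
  finally show ?thesis by simp
qed

lemma wedge_sq_vanish: "wedge_sq u v \<sim> 0"
proof (cases "\<forall>m<2*g. int p dvd u m")
  case True
  then have "sym_sq p g u = sym_sq p g 0"
    using one_less_p by (intro sym_sq_vcong) (auto simp: vcong_def dvd_eq_mod_eq_0)
  then show ?thesis using wedge_sq_zero_left by (simp add: wedge_sq_def sym_sq_zero)
next
  case False
  then obtain m where "m < 2*g" "\<not> int p dvd u m" by blast
  then show ?thesis
    by (cases "int p dvd symp g u v") (auto intro: wedge_sq_vanish_degenerate wedge_sq_vanish_unit)
qed

lemma frag_coinv_eq_0:
  assumes "M \<in> sp_lie p g" "N \<in> sp_lie p g"
  shows "frag_of (M, N) \<sim> 0"
  using one_less_p assms
proof (induction rule: sp_lie_induct2)
  case (sym_sq u v)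
  show ?case using wedge_sq_vanish by (simp add: wedge_sq_def)
next
  case (add_left A B N)
  have "frag_of (mat_add p (2*g) A B, N) \<sim> frag_of (A, N) + frag_of (B, N)"
    using add_left.hyps by (rule rel_add_left)
  also have "\<dots> \<sim> 0 + 0" using add_left.IH by (rule coinv_eq_add)
  finally show ?case by simp
next
  case (add_right M A B)
  have "frag_of (M, mat_add p (2*g) A B) \<sim> frag_of (M, A) + frag_of (M, B)"
    using add_right.hyps by (rule rel_add_right)
  also have "\<dots> \<sim> 0 + 0" using add_right.IH by (rule coinv_eq_add)
  finally show ?case by simp
qed

theorem H2_coinv_trivial: "trivial_group (H2_coinv p g)"
  unfolding trivial_group_def H2_coinv_eq
proof
  have normal: "rels_subgroup p g \<lhd> free_pairs p g"
    by (rule comm_group.subgroup_imp_normal[OF abelian_free_Abelian_group subgroup_rels_subgroup])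
  then show "group (free_pairs p g Mod rels_subgroup p g)"
    by (rule normal.factorgroup_is_group)
  have "r_coset (free_pairs p g) (rels_subgroup p g) c = rels_subgroup p g"
    if "c \<in> carrier (free_pairs p g)" for c
  proof (rule subgroup.rcos_const[OF subgroup_rels_subgroup group_free_Abelian_group])
    have "c \<sim> 0"
      by (rule coinv_eq_all_frag[where f="\<lambda>_. 0"]) (use frag_coinv_eq_0 that in auto)
    then show "c \<in> rels_subgroup p g" by (simp add: coinv_eq_0_iff)
  qed
  moreover have "(0 :: mat \<times> mat \<Rightarrow>\<^sub>0 int) \<in> carrier (free_pairs p g)" by simp
  ultimately show "carrier (free_pairs p g Mod rels_subgroup p g)
      = {\<one>\<^bsub>free_pairs p g Mod rels_subgroup p g\<^esub>}"
    unfolding carrier_FactGroup one_FactGroup by blast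
qed

end

text \<open>The diagonal of \<open>J (u u\<^sup>T J)\<close> is \<open>-((u\<^sup>T J)\<^sub>i)\<^sup>2 \<equiv> (u\<^sup>T J)\<^sub>i\<close> mod 2, so
  \<open>M \<mapsto> diag (J M)\<close> is an additive map recovering \<open>u\<^sup>T J\<close> from the square of \<open>u\<close>; pairing
  two such vectors by \<open>\<omega>\<close> yields the invariant that detects the nontrivial class for \<open>p = 2\<close>.\<close>

definition diag_vec :: "nat \<Rightarrow> mat \<Rightarrow> nat \<Rightarrow> int" where
  "diag_vec g M = (\<lambda>i. mmul (2*g) (Jint g) M i i)"

definition diag_pairing :: "nat \<Rightarrow> mat \<Rightarrow> mat \<Rightarrow> int" where
  "diag_pairing g M N = symp g (diag_vec g M) (diag_vec g N)"

lemma diag_vec_vcong: "mcong p (2*g) A A' \<Longrightarrow> vcong p (2*g) (diag_vec g A) (diag_vec g A')"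
  using mcong_mmul_right[of p "2*g" A A' "Jint g"] by (simp add: mcong_def vcong_def diag_vec_def)

lemma diag_vec_add: "diag_vec g (A + B) = diag_vec g A + diag_vec g B"
  unfolding diag_vec_def mmul_add_right by (simp add: plus_fun_def)

lemma neg_square_mod2: "(- (r * r)) mod 2 = (r::int) mod 2"
proof -
  have "- (r * r) - r = - (r * (r + 1))" by algebra
  moreover have "even (r * (r+1))" by simp
  ultimately have "2 dvd (- (r * r) - r)" by simp
  then show ?thesis by (simp add: mod_eq_dvd_iff)
qed

lemma diag_vec_sym_sq: "vcong 2 (2*g) (diag_vec g (sym_sq 2 g u)) (symp_row g u)"
proof -
  have "vcong 2 (2*g) (diag_vec g (sym_sq 2 g u)) (diag_vec g (outer u (symp_row g u)))"
    by (rule diag_vec_vcong[OF mcong_sym_sq])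
  moreover have "vcong 2 (2*g) (diag_vec g (outer u (symp_row g u))) (symp_row g u)"
    unfolding vcong_def
  proof (intro allI impI)
    fix i assume i: "i < 2*g"
    have "diag_vec g (outer u (symp_row g u)) i = - (symp_row g u i * symp_row g u i)"
      unfolding diag_vec_def mmul_outer_right using mvmul_Jint[OF i, of u] by (simp add: outer_def)
    then show "diag_vec g (outer u (symp_row g u)) i mod int 2 = symp_row g u i mod int 2"
      by (simp add: neg_square_mod2)
  qed
  ultimately show ?thesis using vcong_trans by blast
qed

lemma symp_symp_row: "symp g (symp_row g u) (symp_row g v) = symp g u v"
  unfolding symp_def symp_row_def by (intro sum.cong) auto

lemma diag_pairing_sym_sq: "diag_pairing g (sym_sq 2 g u) (sym_sq 2 g v) mod 2 = symp g u v mod 2"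
  using symp_vcong[OF diag_vec_sym_sq diag_vec_sym_sq, of g u v]
    by (simp add: diag_pairing_def symp_symp_row)

lemma diag_pairing_add_left: "diag_pairing g (mat_add 2 (2*g) A B) N mod 2 = (diag_pairing g A N
    + diag_pairing g B N) mod 2"
proof -
  have "vcong 2 (2*g) (diag_vec g (mat_add 2 (2*g) A B)) (diag_vec g A + diag_vec g B)"
    unfolding diag_vec_add[symmetric] by (rule diag_vec_vcong[OF mcong_mat_add])
  then have "symp g (diag_vec g (mat_add 2 (2*g) A B)) (diag_vec g N) mod int 2
      = symp g (diag_vec g A + diag_vec g B) (diag_vec g N) mod int 2"
    by (rule symp_vcong[OF _ vcong_refl])
  then show ?thesis by (simp add: diag_pairing_def symp_add_left)
qed

lemma diag_pairing_add_right: "diag_pairing g N (mat_add 2 (2*g) A B) mod 2 = (diag_pairing g N A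
    + diag_pairing g N B) mod 2"
proof -
  have "vcong 2 (2*g) (diag_vec g (mat_add 2 (2*g) A B)) (diag_vec g A + diag_vec g B)"
    unfolding diag_vec_add[symmetric] by (rule diag_vec_vcong[OF mcong_mat_add])
  then have "symp g (diag_vec g N) (diag_vec g (mat_add 2 (2*g) A B)) mod int 2
      = symp g (diag_vec g N) (diag_vec g A + diag_vec g B) mod int 2"
    by (rule symp_vcong[OF vcong_refl])
  then show ?thesis by (simp add: diag_pairing_def symp_add_right)
qed

lemma diag_pairing_self: "diag_pairing g M M = 0"
  by (simp add: diag_pairing_def)

text \<open>The additive extension of \<open>diag_pairing\<close> to formal sums of pairs, obtained from
  \<open>frag_extend\<close> with values in the free abelian group \<open>unit \<Rightarrow>\<^sub>0 int \<cong> \<int>\<close>.\<close>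

definition pairing_sum :: "nat \<Rightarrow> (mat \<times> mat \<Rightarrow>\<^sub>0 int) \<Rightarrow> int" where
  "pairing_sum g c =
     Poly_Mapping.lookup (frag_extend (\<lambda>k. frag_cmul (diag_pairing g (fst k) (snd k)) (frag_of
         ())) c) ()"

lemma pairing_sum_add: "pairing_sum g (a + b) = pairing_sum g a + pairing_sum g b"
  by (simp add: pairing_sum_def frag_extend_add lookup_add)

lemma pairing_sum_diff: "pairing_sum g (a - b) = pairing_sum g a - pairing_sum g b"
  by (simp add: pairing_sum_def frag_extend_diff lookup_minus)

lemma pairing_sum_frag_of: "pairing_sum g (frag_of (M, N)) = diag_pairing g M N"
  by (simp add: pairing_sum_def)

lemma pairing_sum_0: "pairing_sum g 0 = 0"
  by (simp add: pairing_sum_def)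

definition parity_hom :: "nat \<Rightarrow> (mat \<times> mat \<Rightarrow>\<^sub>0 int) \<Rightarrow> int" where
  "parity_hom g c = pairing_sum g c mod 2"

lemma parity_hom_hom: "parity_hom g \<in> hom (free_pairs 2 g) (integer_mod_group 2)"
proof (rule homI)
  fix x assume "x \<in> carrier (free_pairs 2 g)"
  show "parity_hom g x \<in> carrier (integer_mod_group 2)"
    by (simp add: parity_hom_def carrier_integer_mod_group)
next
  fix x y
  show "parity_hom g (x \<otimes>\<^bsub>free_pairs 2 g\<^esub> y) = parity_hom g x \<otimes>\<^bsub>integer_mod_group 2\<^esub> parity_hom g y"
    by (simp add: parity_hom_def pairing_sum_add mod_add_eq)
qed

lemma group_hom_parity_hom: "group_hom (free_pairs 2 g) (integer_mod_group 2) (parity_hom g)"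
  unfolding group_hom_def group_hom_axioms_def using parity_hom_hom by simp

locale sp_coinv_mod2 =
  fixes g :: nat
  assumes g_pos: "0 < g"

sublocale sp_coinv_mod2 \<subseteq> sp_coinv 2 g
  by unfold_locales simp

context sp_coinv_mod2
begin

notation coinv_eq (infix "\<sim>" 50)

lemma diag_pairing_mat_conj:
  assumes X: "X \<in> Sp_grp 2 g" "mat_mul 2 (2*g) X Y = mat_one (2*g)"
    and M: "M \<in> sp_lie 2 g" and N: "N \<in> sp_lie 2 g"
  shows "diag_pairing g (mat_conj 2 g X Y M) (mat_conj 2 g X Y N) mod 2 = diag_pairing g M N mod 2"
  using one_less_p M N
proof (induction rule: sp_lie_induct2)
  case (sym_sq u v)
  have "diag_pairing g (mat_conj 2 g X Y (sym_sq 2 g u)) (mat_conj 2 g X Y (sym_sq 2 g v)) mod 2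
      = symp g (mvmul (2*g) X u) (mvmul (2*g) X v) mod 2"
    using X by (simp add: mat_conj_sym_sq diag_pairing_sym_sq)
  also have "\<dots> = symp g u v mod 2" using Sp_grp_preserves_symp[of 2 X g] X by simp
  finally show ?case by (simp add: diag_pairing_sym_sq)
next
  case (add_left A B N)
  let ?c = "mat_conj 2 g X Y"
  have "diag_pairing g (?c (mat_add 2 (2*g) A B)) (?c N) mod 2
      = diag_pairing g (mat_add 2 (2*g) (?c A) (?c B)) (?c N) mod 2"
    by (subst mat_conj_mat_add) simp_all
  also have "\<dots> = (diag_pairing g (?c A) (?c N) + diag_pairing g (?c B) (?c N)) mod 2"
    by (rule diag_pairing_add_left)
  also have "\<dots> = (diag_pairing g A N + diag_pairing g B N) mod 2"
    using add_left.IH by (rule mod_add_cong)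
  also have "\<dots> = diag_pairing g (mat_add 2 (2*g) A B) N mod 2"
    by (rule diag_pairing_add_left[symmetric])
  finally show ?case .
next
  case (add_right M A B)
  let ?c = "mat_conj 2 g X Y"
  have "diag_pairing g (?c M) (?c (mat_add 2 (2*g) A B)) mod 2
      = diag_pairing g (?c M) (mat_add 2 (2*g) (?c A) (?c B)) mod 2"
    by (subst mat_conj_mat_add) simp_all
  also have "\<dots> = (diag_pairing g (?c M) (?c A) + diag_pairing g (?c M) (?c B)) mod 2"
    by (rule diag_pairing_add_right)
  also have "\<dots> = (diag_pairing g M A + diag_pairing g M B) mod 2"
    using add_right.IH by (rule mod_add_cong)
  also have "\<dots> = diag_pairing g M (mat_add 2 (2*g) A B) mod 2"
    by (rule diag_pairing_add_right[symmetric])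
  finally show ?case .
qed

lemma coinv_rels_parity:
  assumes "r \<in> coinv_rels 2 g"
  shows "parity_hom g r = 0"
  using assms unfolding coinv_rels_def
proof (elim UnE CollectE exE conjE)
  fix M M' N assume r: "r = frag_of (mat_add 2 (2*g) M M', N) - frag_of (M, N) - frag_of (M', N)"
  have "2 dvd diag_pairing g (mat_add 2 (2*g) M M') N - (diag_pairing g M N + diag_pairing g M' N)"
    using diag_pairing_add_left[of g M M' N] by (simp only: mod_eq_dvd_iff)
  then show "parity_hom g r = 0"
    unfolding r parity_hom_def pairing_sum_diff pairing_sum_frag_of
      by (simp only: diff_diff_eq dvd_imp_mod_0)
next
  fix M N N' assume r: "r = frag_of (M, mat_add 2 (2*g) N N') - frag_of (M, N) - frag_of (M, N')"
  have "2 dvd diag_pairing g M (mat_add 2 (2*g) N N') - (diag_pairing g M N + diag_pairing g M N')"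
    using diag_pairing_add_right[of g M N N'] by (simp only: mod_eq_dvd_iff)
  then show "parity_hom g r = 0"
    unfolding r parity_hom_def pairing_sum_diff pairing_sum_frag_of
      by (simp only: diff_diff_eq dvd_imp_mod_0)
next
  fix M assume "r = frag_of (M, M)"
  then show "parity_hom g r = 0" by (simp add: parity_hom_def pairing_sum_frag_of diag_pairing_self)
next
  fix X Y M N
  assume r: "r = frag_of (mat_mul 2 (2*g) X (mat_mul 2 (2*g) M Y),
                          mat_mul 2 (2*g) X (mat_mul 2 (2*g) N Y)) - frag_of (M, N)"
    and "X \<in> Sp_grp 2 g" "mat_mul 2 (2*g) X Y = mat_one (2*g)" "M \<in> sp_lie 2 g" "N \<in> sp_lie 2 g"
  then have "diag_pairing g (mat_conj 2 g X Y M) (mat_conj 2 g X Y N) mod 2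
      = diag_pairing g M N mod 2"
    by (intro diag_pairing_mat_conj)
  then have "2 dvd diag_pairing g (mat_conj 2 g X Y M) (mat_conj 2 g X Y N) - diag_pairing g M N"
    by (simp only: mod_eq_dvd_iff)
  then show "parity_hom g r = 0"
    unfolding r parity_hom_def pairing_sum_diff pairing_sum_frag_of mat_conj_def
      by (simp only: dvd_imp_mod_0)
qed

abbreviation wedge_basic :: "mat \<times> mat \<Rightarrow>\<^sub>0 int" where
  "wedge_basic \<equiv> wedge_sq (unit_vec 0) (unit_vec g)"

lemma wedge_sq_transvect2:
  assumes "even (symp g w x)" "odd (symp g w t)"
  shows "wedge_sq x t \<sim> wedge_sq x (t + w)"
proof (rule wedge_sq_transvect[where a=1 and w=w])
  show "vcong 2 (2*g) (x + vsmult (1 * symp g w x) w) x"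
    using vcong_add_vsmult[of "1 * symp g w x" 2 0] assms(1) by (simp add: even_iff_mod_2_eq_zero)
  show "vcong 2 (2*g) (t + vsmult (1 * symp g w t) w) (t + w)"
    using vcong_add_vsmult[of "1 * symp g w t" 2 1] assms(2) by (simp add: odd_iff_mod_2_eq_one)
qed

lemma wedge_sq_move_odd_triangle:
  assumes "odd (symp g x y)" "odd (symp g x y')" "odd (symp g y y')"
  shows "wedge_sq x y \<sim> wedge_sq x y'"
proof (rule wedge_sq_transvect[where a=1 and w="y + y'"])
  have "even (symp g (y + y') x)" using assms by (simp add: symp_add_left even_symp_commute)
  then show "vcong 2 (2*g) (x + vsmult (1 * symp g (y + y') x) (y + y')) x"
    using vcong_add_vsmult[of "1 * symp g (y + y') x" 2 0] by (simp add: even_iff_mod_2_eq_zero)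
  have "odd (symp g (y + y') y)" using assms by (simp add: symp_add_left even_symp_commute)
  then have "vcong 2 (2*g) (y + vsmult (1 * symp g (y + y') y) (y + y')) (y + vsmult 1 (y + y'))"
    by (intro vcong_add_vsmult) (simp add: odd_iff_mod_2_eq_one)
  also have "vcong 2 (2*g) (y + vsmult 1 (y + y')) y'"
    by (auto simp: vcong_def vsmult_def plus_fun_def)
  finally show "vcong 2 (2*g) (y + vsmult (1 * symp g (y + y') y) (y + y')) y'" .
qed

lemma wedge_sq_move_odd:
  assumes "odd (symp g x y)" "odd (symp g x y')"
  shows "wedge_sq x y \<sim> wedge_sq x y'"
proof (cases "odd (symp g y y')")
  case True then show ?thesis using wedge_sq_move_odd_triangle assms by blast
next
  case False
  let ?z = "y' + x"
  have "odd (symp g x ?z)" "odd (symp g y ?z)" "odd (symp g ?z y')"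
    using assms False by (simp_all add: symp_add_left symp_add_right even_symp_commute)
  then have "wedge_sq x y \<sim> wedge_sq x ?z" "wedge_sq x ?z \<sim> wedge_sq x y'"
    using assms by (blast intro: wedge_sq_move_odd_triangle)+
  then show ?thesis by (rule coinv_eq_trans)
qed

lemma double_coinv_eq_0: "M \<in> sp_lie 2 g \<Longrightarrow> N \<in> sp_lie 2 g \<Longrightarrow> frag_of (M, N) + frag_of (M, N) \<sim> 0"
  using rel_char by (simp add: frag_cmul_two)

lemma wedge_sq_double: "wedge_sq x y + wedge_sq x y \<sim> 0"
  unfolding wedge_sq_def by (intro double_coinv_eq_0 sym_sq_in_sp_lie one_less_p)

lemma wedge_sq_commute: "wedge_sq x y \<sim> wedge_sq y x"
proof -
  have "wedge_sq x y + (wedge_sq y x + wedge_sq y x) \<sim> wedge_sq x y + 0"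
    by (intro coinv_eq_add coinv_eq_refl wedge_sq_double)
  from coinv_eq_sym[OF this]
  have "wedge_sq x y \<sim> (wedge_sq x y + wedge_sq y x) + wedge_sq y x" by (simp add: add.assoc)
  also have "\<dots> \<sim> 0 + wedge_sq y x"
    by (intro coinv_eq_add wedge_sq_antisym coinv_eq_refl)
  finally show ?thesis by simp
qed

lemma wedge_sq_odd_mod2:
  assumes xy: "odd (symp g x y)"
  shows "wedge_sq x y \<sim> wedge_basic"
proof -
  have e0g: "odd (symp g (unit_vec 0) (unit_vec g))" using symp_unit_vec_0_g[OF g_pos] by simp
  obtain y' where y': "odd (symp g x y')" "odd (symp g (unit_vec 0) y')"
  proof (cases "vcong 2 (2*g) x (unit_vec 0)")
    case True
    then have "symp g x (unit_vec g) mod 2 = symp g (unit_vec 0) (unit_vec g) mod 2"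
      using symp_vcong[OF _ vcong_refl] by fastforce
    then show ?thesis using that e0g by (simp add: odd_iff_mod_2_eq_one)
  next
    case False
    have "\<not> vcong 2 (2*g) (unit_vec 0) 0" using g_pos by (auto simp: vcong_def unit_vec_def)
    then obtain a where a: "odd (symp g a (unit_vec 0))" "even (symp g a x)"
      using exists_symp_odd_even False vcong_sym by metis
    obtain b where b: "odd (symp g b x)" "even (symp g b (unit_vec 0))"
      using exists_symp_odd_even odd_symp_imp_not_vcong_0[OF xy] False vcong_sym by metis
    show ?thesis using a b
      by (intro that[of "a + b"]) (simp_all add: symp_add_right even_symp_commute[of g _ a]
          even_symp_commute[of g _ b])
  qed
  have "wedge_sq x y \<sim> wedge_sq x y'" by (rule wedge_sq_move_odd[OF xy y'(1)])
  also have "\<dots> \<sim> wedge_sq y' x" by (rule wedge_sq_commute)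
  also have "\<dots> \<sim> wedge_sq y' (unit_vec 0)"
    by (rule wedge_sq_move_odd) (use y' in \<open>simp_all add: even_symp_commute[of g y']\<close>)
  also have "\<dots> \<sim> wedge_sq (unit_vec 0) y'" by (rule wedge_sq_commute)
  also have "\<dots> \<sim> wedge_basic" by (rule wedge_sq_move_odd[OF y'(2) e0g])
  finally show ?thesis .
qed

text \<open>Unless one of \<open>x\<close>, \<open>y\<close>, \<open>x - y\<close> vanishes mod 2, there are \<open>a\<close>, \<open>b\<close> such that the class
  \<open>Q t = [x\<^sup>2 \<and> t\<^sup>2]\<close> is invariant under four transvections moving \<open>a + b\<close>, \<open>a\<close>, \<open>b\<close>; comparing
  the resulting values of its polar form \<open>B\<close> gives \<open>Q y = -2 Q (x + y) = 0\<close>.\<close>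

lemma wedge_sq_even_mod2:
  assumes xy: "even (symp g x y)"
  shows "wedge_sq x y \<sim> 0"
proof (cases "vcong 2 (2*g) x 0 \<or> vcong 2 (2*g) y 0 \<or> vcong 2 (2*g) x y")
  case True
  then consider "wedge_sq x y = wedge_sq 0 y" | "wedge_sq x y = wedge_sq x 0" | "wedge_sq x y
      = wedge_sq y y"
    by (metis wedge_sq_vcong vcong_refl)
  then show ?thesis by cases (simp_all add: wedge_sq_zero_left wedge_sq_zero_right wedge_sq_self)
next
  case False
  then obtain a b where a: "odd (symp g a y)" "even (symp g a x)"
      and b: "odd (symp g b x)" "even (symp g b y)"
    using exists_symp_odd_even vcong_sym by metis
  have parity: "even (symp g x a)" "odd (symp g y a)" "odd (symp g x b)" "even (symp g y b)"
      "even (symp g y x)"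
    using a b xy by (simp_all add: even_symp_commute[of g _ a] even_symp_commute[of g _ b]
        even_symp_commute[of g y])
  let ?Q = "wedge_sq x" and ?B = "wedge_mixed x"
  have moves: "?Q (a + b) \<sim> ?Q (a + b + x)" "?Q (a + b) \<sim> ?Q (a + b + y)"
      "?Q a \<sim> ?Q (a + (x + y))" "?Q b \<sim> ?Q (b + (x + y))"
    by (rule wedge_sq_transvect2; simp add: symp_add_left symp_add_right parity)+
  have Bx: "?B (a + b) x \<sim> 0"
    using coinv_eq_trans[OF wedge_mixed_if_invariant[OF moves(1)] coinv_eq_neg[OF wedge_sq_self]]
      by simp
  have "0 + - ?Q y \<sim> ?B (a + b) x + ?B (a + b) y"
    by (intro coinv_eq_add coinv_eq_sym[OF Bx] coinv_eq_sym[OF wedge_mixed_if_invariant[OF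
        moves(2)]])
  also have "\<dots> \<sim> (?B a x + ?B b x) + (?B a y + ?B b y)"
    by (intro coinv_eq_add wedge_mixed_add_left)
  also have "\<dots> \<sim> (?B x a + ?B y a) + (?B x b + ?B y b)"
    by (simp add: wedge_mixed_commute algebra_simps)
  also have "\<dots> \<sim> ?B (x + y) a + ?B (x + y) b"
    by (intro coinv_eq_add coinv_eq_sym[OF wedge_mixed_add_left])
  also have "\<dots> \<sim> - ?Q (x + y) + - ?Q (x + y)"
    unfolding wedge_mixed_commute[of x "x + y"]
    by (intro coinv_eq_add wedge_mixed_if_invariant moves(3,4))
  also have "\<dots> \<sim> - 0"
    using coinv_eq_neg[OF wedge_sq_double[of x "x + y"]] by simp
  finally have "- ?Q y \<sim> - 0" by simp
  then show ?thesis using coinv_eq_neg by fastforce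
qed

lemma frag_cmul_mod2_coinv_eq:
  assumes "k mod 2 = l mod 2" "M \<in> sp_lie 2 g" "N \<in> sp_lie 2 g"
  shows "frag_cmul k (frag_of (M, N)) \<sim> frag_cmul l (frag_of (M, N))"
proof -
  obtain j where k: "k = l + 2 * j" using assms(1)
    by (metis add.commute minus_mod_eq_mult_div mod_mod_trivial mod_eq_dvd_iff dvd_def
        diff_add_cancel)
  have "frag_cmul l (frag_of (M, N)) + frag_cmul j (frag_cmul (int 2) (frag_of (M, N)))
      \<sim> frag_cmul l (frag_of (M, N)) + frag_cmul j 0"
    by (intro coinv_eq_add coinv_eq_refl coinv_eq_cmul rel_char assms)
  moreover have "frag_cmul l (frag_of (M, N)) + frag_cmul j (frag_cmul (int 2) (frag_of (M, N)))
      = frag_cmul k (frag_of (M, N))"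
    unfolding k by (simp add: frag_cmul_distrib mult.commute)
  ultimately show ?thesis by simp
qed

lemma wedge_basic_cmul_mod2: "k mod 2 = l mod 2 \<Longrightarrow> frag_cmul k wedge_basic \<sim> frag_cmul l wedge_basic"
  unfolding wedge_sq_def by (intro frag_cmul_mod2_coinv_eq sym_sq_in_sp_lie one_less_p)

lemma wedge_sq_mod2: "wedge_sq x y \<sim> frag_cmul (symp g x y) wedge_basic"
proof (cases "odd (symp g x y)")
  case True
  then have "frag_cmul 1 wedge_basic \<sim> frag_cmul (symp g x y) wedge_basic"
    by (intro wedge_basic_cmul_mod2) (simp add: odd_iff_mod_2_eq_one)
  then have "wedge_basic \<sim> frag_cmul (symp g x y) wedge_basic" by simp
  with wedge_sq_odd_mod2[OF True] show ?thesis by (rule coinv_eq_trans)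
next
  case False
  then have "frag_cmul 0 wedge_basic \<sim> frag_cmul (symp g x y) wedge_basic"
    by (intro wedge_basic_cmul_mod2) (simp add: even_iff_mod_2_eq_zero)
  then have "0 \<sim> frag_cmul (symp g x y) wedge_basic" by simp
  with wedge_sq_even_mod2 False show ?thesis by (blast intro: coinv_eq_trans)
qed

lemma frag_coinv_eq_mod2:
  assumes "M \<in> sp_lie 2 g" "N \<in> sp_lie 2 g"
  shows "frag_of (M, N) \<sim> frag_cmul (diag_pairing g M N) wedge_basic"
  using one_less_p assms
proof (induction rule: sp_lie_induct2)
  case (sym_sq u v)
  have "frag_of (sym_sq 2 g u, sym_sq 2 g v) \<sim> frag_cmul (symp g u v) wedge_basic"
    using wedge_sq_mod2 by (simp add: wedge_sq_def)
  also have "\<dots> \<sim> frag_cmul (diag_pairing g (sym_sq 2 g u) (sym_sq 2 g v)) wedge_basic"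
    by (rule wedge_basic_cmul_mod2) (simp add: diag_pairing_sym_sq)
  finally show ?case .
next
  case (add_left A B N)
  have "frag_of (mat_add 2 (2*g) A B, N) \<sim> frag_of (A, N) + frag_of (B, N)"
    using add_left.hyps by (rule rel_add_left)
  also have "\<dots> \<sim> frag_cmul (diag_pairing g A N + diag_pairing g B N) wedge_basic"
    using coinv_eq_add[OF add_left.IH] by (simp add: frag_cmul_distrib)
  also have "\<dots> \<sim> frag_cmul (diag_pairing g (mat_add 2 (2*g) A B) N) wedge_basic"
    by (rule wedge_basic_cmul_mod2) (simp add: diag_pairing_add_left)
  finally show ?case .
next
  case (add_right M A B)
  have "frag_of (M, mat_add 2 (2*g) A B) \<sim> frag_of (M, A) + frag_of (M, B)"
    using add_right.hyps by (rule rel_add_right)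
  also have "\<dots> \<sim> frag_cmul (diag_pairing g M A + diag_pairing g M B) wedge_basic"
    using coinv_eq_add[OF add_right.IH] by (simp add: frag_cmul_distrib)
  also have "\<dots> \<sim> frag_cmul (diag_pairing g M (mat_add 2 (2*g) A B)) wedge_basic"
    by (rule wedge_basic_cmul_mod2) (simp add: diag_pairing_add_right)
  finally show ?case .
qed

lemma kernel_parity_hom: "kernel (free_pairs 2 g) (integer_mod_group 2) (parity_hom g)
    = rels_subgroup 2 g"
proof
  show "rels_subgroup 2 g \<subseteq> kernel (free_pairs 2 g) (integer_mod_group 2) (parity_hom g)"
    unfolding rels_subgroup_def
  proof (rule group.generate_subgroup_incl[OF group_free_Abelian_group _
        group_hom.subgroup_kernel[OF group_hom_parity_hom]])
    show "coinv_rels 2 g \<subseteq> kernel (free_pairs 2 g) (integer_mod_group 2) (parity_hom g)"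
    proof
      fix r assume r: "r \<in> coinv_rels 2 g"
      then have "r \<in> carrier (free_pairs 2 g)" using coinv_rels_carrier by blast
      then show "r \<in> kernel (free_pairs 2 g) (integer_mod_group 2) (parity_hom g)"
        using coinv_rels_parity[OF r] by (simp add: kernel_def)
    qed
  qed
  show "kernel (free_pairs 2 g) (integer_mod_group 2) (parity_hom g) \<subseteq> rels_subgroup 2 g"
  proof
    fix c assume "c \<in> kernel (free_pairs 2 g) (integer_mod_group 2) (parity_hom g)"
    then have c: "Poly_Mapping.keys c \<subseteq> sp_lie 2 g \<times> sp_lie 2 g" "pairing_sum g c mod 2 = 0"
      by (auto simp: kernel_def parity_hom_def)
    have "c \<sim> frag_cmul (pairing_sum g c) wedge_basic"
      by (rule coinv_eq_all_frag[where f="\<lambda>c. frag_cmul (pairing_sum g c) wedge_basic", OF _ _ _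
          c(1)])
        (simp_all add: frag_coinv_eq_mod2 pairing_sum_frag_of pairing_sum_0 pairing_sum_diff
          frag_cmul_diff_distrib)
    also have "\<dots> \<sim> frag_cmul 0 wedge_basic" by (rule wedge_basic_cmul_mod2) (use c(2) in simp)
    finally show "c \<in> rels_subgroup 2 g" by (simp add: coinv_eq_0_iff)
  qed
qed

lemma parity_hom_wedge_basic: "parity_hom g wedge_basic = 1"
proof -
  have "parity_hom g wedge_basic = symp g (unit_vec 0) (unit_vec g) mod 2"
    by (simp add: parity_hom_def wedge_sq_def pairing_sum_frag_of diag_pairing_sym_sq)
  then show ?thesis using symp_unit_vec_0_g[OF g_pos] by simp
qed

theorem H2_coinv_iso: "H2_coinv 2 g \<cong> integer_mod_group 2"
proof -
  have "parity_hom g ` carrier (free_pairs 2 g) = carrier (integer_mod_group 2)"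
  proof
    show "parity_hom g ` carrier (free_pairs 2 g) \<subseteq> carrier (integer_mod_group 2)"
      by (auto simp: parity_hom_def carrier_integer_mod_group)
    have "0 \<in> parity_hom g ` carrier (free_pairs 2 g)"
      by (rule image_eqI[of _ _ 0]) (simp_all add: parity_hom_def pairing_sum_0)
    moreover have "1 \<in> parity_hom g ` carrier (free_pairs 2 g)"
      by (rule image_eqI[of _ _ wedge_basic])
        (simp add: parity_hom_wedge_basic, simp add: wedge_sq_def sym_sq_in_sp_lie one_less_p)
    moreover have "carrier (integer_mod_group 2) = {0, 1}"
      by (auto simp: carrier_integer_mod_group)
    ultimately show "carrier (integer_mod_group 2) \<subseteq> parity_hom g ` carrier (free_pairs 2 g)"
      by simp
  qed
  then have "free_pairs 2 g Mod kernel (free_pairs 2 g) (integer_mod_group 2) (parity_hom g)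
      \<cong> integer_mod_group 2"
    by (rule group_hom.FactGroup_iso[OF group_hom_parity_hom])
  then show ?thesis unfolding H2_coinv_eq kernel_parity_hom .
qed

end

theorem lemma4p10:
  fixes g p :: nat
  assumes "g \<ge> 3" and "prime p"
  shows "(odd p \<longrightarrow> trivial_group (H2_coinv p g))
       \<and> (p = 2 \<longrightarrow> H2_coinv p g \<cong> integer_mod_group 2)"
proof (intro conjI impI)
  assume "odd p"
  then interpret sp_coinv_odd p g
    using \<open>prime p\<close> prime_gt_1_nat by unfold_locales auto
  show "trivial_group (H2_coinv p g)" by (rule H2_coinv_trivial)
next
  assume "p = 2"
  \<comment> \<open>of \<open>g \<ge> 3\<close> only \<open>g > 0\<close> is needed\<close>
  interpret sp_coinv_mod2 g using \<open>g \<ge> 3\<close> by unfold_locales simp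
  show "H2_coinv p g \<cong> integer_mod_group 2" using \<open>p = 2\<close> H2_coinv_iso by simp
qed

end
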